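(* Let $\mathcal{F}$ be a regular one-dimensional foliation of $\mathbb{T}^2$, let $A\in H_1(\mathbb{T}^2,\mathbb{Z})$ be a class not represented by closed leaves of $\mathcal{F}$, and let $\gamma$ be a minimal contact curve for $A$. Then for every tangency point $t_0$ of $\gamma$ with $\mathcal{F}$, the leaf of $\mathcal{F}$ through $t_0$ does not cross $\gamma$ at $t_0$.
   Context: A minimal contact curve for $A$ is an embedded smooth loop $\gamma:S^1\to\mathbb{T}^2$ representing $A$ whose number of tangency points with $\mathcal{F}$ (points where $\gamma'$ is tangent to $\mathcal{F}$) is finite and minimal among all embedded smooth loops representing $A$. *)

theory Defs
  imports "HOL-Analysis.Analysis"
begin

text \<open>The torus T^2 is R^2 / Z^2; everything is lifted to the universal cover R^2.\<close>

definition Z2 :: "(real^2) set" where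
  "Z2 = {v. \<forall>i. v $ i \<in> \<int>}"

text \<open>C-infinity smoothness on an open set U of R^2: all iterated partial derivatives exist.
  P is indexes the iterated partial derivatives (True = d/dx1, False = d/dx2).\<close>
definition smooth_on :: "(real^2) set \<Rightarrow> (real^2 \<Rightarrow> 'b::real_normed_vector) \<Rightarrow> bool" where
  "smooth_on U f \<longleftrightarrow> (\<exists>P :: bool list \<Rightarrow> real^2 \<Rightarrow> 'b.
      (\<forall>x\<in>U. P [] x = f x) \<and>
      (\<forall>is. \<forall>x\<in>U. (P is has_derivative
          (\<lambda>h. (h $ 1) *\<^sub>R P (True # is) x + (h $ 2) *\<^sub>R P (False # is) x)) (at x)))"

definition smooth_curve :: "(real \<Rightarrow> real^2) \<Rightarrow> bool" where
  "smooth_curve g \<longleftrightarrow> (\<exists>D :: nat \<Rightarrow> real \<Rightarrow> real^2. D 0 = g \<and>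
      (\<forall>n t. (D n has_vector_derivative D (Suc n) t) (at t)))"

text \<open>A regular (smooth, nonsingular) one-dimensional foliation of T^2, given by its tangent
  line field L (the Z^2-periodic lift to R^2): locally spanned by a smooth nonvanishing vector
  field.  In dimension one, foliations are exactly the smooth line fields.\<close>
definition foliation_T2 :: "(real^2 \<Rightarrow> (real^2) set) \<Rightarrow> bool" where
  "foliation_T2 L \<longleftrightarrow> (\<forall>x. \<forall>k\<in>Z2. L (x + k) = L x) \<and>
     (\<forall>x. \<exists>U (v :: real^2 \<Rightarrow> real^2). open U \<and> x \<in> U \<and> smooth_on U v \<and>
        (\<forall>y\<in>U. v y \<noteq> 0 \<and> L y = span {v y}))"

text \<open>Lift g of a smooth embedded loop in T^2 representing the class A \<in> H_1(T^2,Z) = Z^2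
  (parametrised by R / Z).\<close>
definition embedded_loop :: "real^2 \<Rightarrow> (real \<Rightarrow> real^2) \<Rightarrow> bool" where
  "embedded_loop A g \<longleftrightarrow> smooth_curve g \<and> (\<forall>t. g (t + 1) = g t + A) \<and>
     (\<forall>t. vector_derivative g (at t) \<noteq> 0) \<and>
     (\<forall>s t. g s - g t \<in> Z2 \<longrightarrow> s - t \<in> \<int>)"

definition tangencies :: "(real^2 \<Rightarrow> (real^2) set) \<Rightarrow> (real \<Rightarrow> real^2) \<Rightarrow> real set" where
  "tangencies L g = {t \<in> {0..<1}. vector_derivative g (at t) \<in> L (g t)}"

text \<open>A is represented by a closed leaf: some embedded loop in class A is everywhere tangent
  to the foliation (such a loop is exactly a compact leaf).\<close>
definition closed_leaf_class :: "(real^2 \<Rightarrow> (real^2) set) \<Rightarrow> real^2 \<Rightarrow> bool" where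
  "closed_leaf_class L A \<longleftrightarrow> (\<exists>c. embedded_loop A c \<and>
      (\<forall>t. vector_derivative c (at t) \<in> L (c t)))"

definition minimal_contact_curve ::
    "(real^2 \<Rightarrow> (real^2) set) \<Rightarrow> real^2 \<Rightarrow> (real \<Rightarrow> real^2) \<Rightarrow> bool" where
  "minimal_contact_curve L A g \<longleftrightarrow> embedded_loop A g \<and> finite (tangencies L g) \<and>
     (\<forall>g'. embedded_loop A g' \<and> finite (tangencies L g') \<longrightarrow>
        card (tangencies L g) \<le> card (tangencies L g'))"

text \<open>Local first integral near p: a smooth submersion f on a neighbourhood U of p, vanishing
  at p, whose level sets are the plaques (ker df = L).  Its zero set is the local leaf through p.\<close>
definition local_first_integral ::
    "(real^2 \<Rightarrow> (real^2) set) \<Rightarrow> real^2 \<Rightarrow> (real^2) set \<Rightarrow> (real^2 \<Rightarrow> real) \<Rightarrow> bool" where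
  "local_first_integral L p U f \<longleftrightarrow> open U \<and> p \<in> U \<and> smooth_on U f \<and> f p = 0 \<and>
     (\<forall>y\<in>U. \<exists>f'. (f has_derivative f') (at y) \<and> f' \<noteq> (\<lambda>h. 0) \<and> L y = {h. f' h = 0})"

text \<open>The leaf through g t0 crosses g at t0: g passes from one side of the local leaf to the
  other, i.e. arbitrarily close to t0 there are parameters on both sides.\<close>
definition leaf_crosses :: "(real^2 \<Rightarrow> (real^2) set) \<Rightarrow> (real \<Rightarrow> real^2) \<Rightarrow> real \<Rightarrow> bool" where
  "leaf_crosses L g t0 \<longleftrightarrow> (\<exists>U f. local_first_integral L (g t0) U f \<and>
     (\<forall>\<delta>>0. \<exists>s1\<in>ball t0 \<delta>. \<exists>s2\<in>ball t0 \<delta>. g s1 \<in> U \<and> g s2 \<in> U \<and>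
        f (g s1) < 0 \<and> 0 < f (g s2)))"

end

theory Submission
  imports Defs "HOL-Computational_Algebra.Polynomial"
begin

text \<open>Suppose the leaf through a tangency point \<open>\<gamma> t0\<close> crosses \<open>\<gamma>\<close>. Take a local first integral
  \<open>F\<close> with gradient \<open>G\<close> near \<open>\<gamma> t0\<close>. Since tangencies are isolated, \<open>(F \<circ> \<gamma>)' = \<gamma>' \<bullet> G \<gamma>\<close> vanishes
  only at \<open>t0\<close> nearby, and since \<open>F \<circ> \<gamma>\<close> changes sign at \<open>t0\<close> it has the same sign, say positive,
  on both sides. Now push \<open>\<gamma>\<close> in the direction \<open>w = G (\<gamma> t0)\<close> by \<open>\<epsilon>\<close> times a periodised smooth bump
  centred at \<open>t0\<close> whose derivative dominates the bump itself on the left part of its support.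
  Where the bump grows, the new term \<open>\<epsilon> b' (w \<bullet> G)\<close> beats the Lipschitz error of moving \<open>G\<close>;
  elsewhere the old term \<open>\<gamma>' \<bullet> G\<close> is bounded below and \<open>\<epsilon>\<close> is small. So the pushed curve is transverse
  on the whole neighbourhood of \<open>t0\<close>, agrees with \<open>\<gamma>\<close> away from it, and for small \<open>\<epsilon>\<close> is still an
  embedded loop in the class \<open>A\<close>: it has one tangency fewer, contradicting minimality.\<close>

section \<open>Smooth bump functions\<close>

definition smooth_fun :: "(real \<Rightarrow> real) \<Rightarrow> bool" where
  "smooth_fun f \<longleftrightarrow> (\<exists>D. D 0 = f \<and> (\<forall>n t. (D n has_real_derivative D (Suc n) t) (at t)))"

lemma smooth_fun_coinduct:
  assumes "Q f"
    and step: "\<And>g. Q g \<Longrightarrow> \<exists>g'. (\<forall>t. (g has_real_derivative g' t) (at t)) \<and> Q g'"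
  shows "smooth_fun f"
proof -
  define next_deriv where
    "next_deriv g = (SOME g'. (\<forall>t. (g has_real_derivative g' t) (at t)) \<and> Q g')" for g
  have next_deriv: "(\<forall>t. (g has_real_derivative next_deriv g t) (at t)) \<and> Q (next_deriv g)"
    if "Q g" for g
    unfolding next_deriv_def using someI_ex[OF step[OF that]] by blast
  define D where "D n = (next_deriv ^^ n) f" for n
  have QD: "Q (D n)" for n by (induction n) (auto simp: D_def assms(1) next_deriv)
  have "(D n has_real_derivative D (Suc n) t) (at t)" for n t
    using next_deriv[OF QD[of n]] by (simp add: D_def)
  then show ?thesis unfolding smooth_fun_def by (intro exI[of _ D]) (simp add: D_def)
qed

lemma smooth_fun_deriv:
  assumes "smooth_fun f"
  obtains f' where "\<And>t. (f has_real_derivative f' t) (at t)" "smooth_fun f'"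
proof -
  obtain D where D: "D 0 = f" "\<And>n t. (D n has_real_derivative D (Suc n) t) (at t)"
    using assms unfolding smooth_fun_def by blast
  have "smooth_fun (D 1)"
    unfolding smooth_fun_def using D(2) by (intro exI[of _ "\<lambda>n. D (Suc n)"]) auto
  then show ?thesis using that D by auto
qed

lemma smooth_fun_sum_of_products_deriv:
  fixes xs :: "((real \<Rightarrow> real) \<times> (real \<Rightarrow> real)) list"
  assumes "\<forall>p\<in>set xs. smooth_fun (fst p) \<and> smooth_fun (snd p)"
  shows "\<exists>ys. (\<forall>p\<in>set ys. smooth_fun (fst p) \<and> smooth_fun (snd p)) \<and>
     (\<forall>t. ((\<lambda>t. \<Sum>p\<leftarrow>xs. fst p t * snd p t) has_real_derivative (\<Sum>p\<leftarrow>ys. fst p t * snd p t)) (at t))"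
  using assms
proof (induction xs)
  case Nil
  then show ?case by (auto intro!: exI[of _ "[]"])
next
  case (Cons p xs)
  then obtain ys where ys: "\<forall>p\<in>set ys. smooth_fun (fst p) \<and> smooth_fun (snd p)"
     "\<forall>t. ((\<lambda>t. \<Sum>p\<leftarrow>xs. fst p t * snd p t) has_real_derivative (\<Sum>p\<leftarrow>ys. fst p t * snd p t)) (at t)"
    by auto
  obtain f' where f': "\<And>t. (fst p has_real_derivative f' t) (at t)" "smooth_fun f'"
    using smooth_fun_deriv[of "fst p"] Cons.prems by auto
  obtain g' where g': "\<And>t. (snd p has_real_derivative g' t) (at t)" "smooth_fun g'"
    using smooth_fun_deriv[of "snd p"] Cons.prems by auto
  show ?case
  proof (intro exI[of _ "(f', snd p) # (fst p, g') # ys"] conjI allI)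
    show "\<forall>q\<in>set ((f', snd p) # (fst p, g') # ys). smooth_fun (fst q) \<and> smooth_fun (snd q)"
      using ys f' g' Cons.prems by auto
    fix t
    have "((\<lambda>t. fst p t * snd p t + (\<Sum>p\<leftarrow>xs. fst p t * snd p t)) has_real_derivative
        (f' t * snd p t + fst p t * g' t + (\<Sum>p\<leftarrow>ys. fst p t * snd p t))) (at t)"
      using f'(1) g'(1) ys(2) by (auto intro!: derivative_eq_intros simp: algebra_simps)
    then show "((\<lambda>t. \<Sum>p\<leftarrow>p # xs. fst p t * snd p t) has_real_derivative
         (\<Sum>p\<leftarrow>(f', snd p) # (fst p, g') # ys. fst p t * snd p t)) (at t)"
      by (simp add: algebra_simps)
  qed
qed

text \<open>All derivatives of a product are sums of products of derivatives of the factors, so the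
  sums of products of smooth functions form an invariant for the coinduction.\<close>
lemma smooth_fun_mult:
  assumes "smooth_fun f" "smooth_fun g"
  shows "smooth_fun (\<lambda>t. f t * g t)"
proof -
  let ?Q = "\<lambda>h. \<exists>xs :: ((real \<Rightarrow> real) \<times> (real \<Rightarrow> real)) list.
      (\<forall>p\<in>set xs. smooth_fun (fst p) \<and> smooth_fun (snd p)) \<and> h = (\<lambda>t. \<Sum>p\<leftarrow>xs. fst p t * snd p t)"
  show ?thesis
  proof (rule smooth_fun_coinduct[where Q = ?Q])
    show "?Q (\<lambda>t. f t * g t)" using assms by (intro exI[of _ "[(f,g)]"]) auto
  next
    fix h assume "?Q h"
    then obtain xs where xs: "\<forall>p\<in>set xs. smooth_fun (fst p) \<and> smooth_fun (snd p)"
      "h = (\<lambda>t. \<Sum>p\<leftarrow>xs. fst p t * snd p t)" by blast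
    from smooth_fun_sum_of_products_deriv[OF xs(1)] obtain ys where
      "\<forall>p\<in>set ys. smooth_fun (fst p) \<and> smooth_fun (snd p)"
      "\<forall>t. ((\<lambda>t. \<Sum>p\<leftarrow>xs. fst p t * snd p t) has_real_derivative (\<Sum>p\<leftarrow>ys. fst p t * snd p t)) (at t)"
      by blast
    then show "\<exists>g'. (\<forall>t. (h has_real_derivative g' t) (at t)) \<and> ?Q g'"
      using xs(2) by (intro exI[of _ "\<lambda>t. \<Sum>p\<leftarrow>ys. fst p t * snd p t"]) auto
  qed
qed

lemma smooth_fun_affine:
  assumes "smooth_fun f"
  shows "smooth_fun (\<lambda>x. f (a * x + c))"
proof -
  obtain D where D: "D 0 = f" "\<And>n t. (D n has_real_derivative D (Suc n) t) (at t)"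
    using assms unfolding smooth_fun_def by blast
  have "((\<lambda>x. a ^ n * D n (a * x + c)) has_real_derivative a ^ Suc n * D (Suc n) (a * x + c)) (at x)"
    for n x
    by (auto intro!: derivative_eq_intros DERIV_chain2[OF D(2)] simp: algebra_simps)
  then show ?thesis unfolding smooth_fun_def using D(1)
    by (intro exI[of _ "\<lambda>n x. a ^ n * D n (a * x + c)"]) auto
qed

lemma smooth_fun_exp: "smooth_fun (\<lambda>x. exp (K * x))"
  unfolding smooth_fun_def
  by (rule exI[of _ "\<lambda>n x. K ^ n * exp (K * x)"]) (auto intro!: derivative_eq_intros)

lemma tendsto_mult_poly_div_exp_at_top: "((\<lambda>y::real. y * poly p y / exp y) \<longlongrightarrow> 0) at_top"
proof -
  have "((\<lambda>y::real. \<Sum>i\<le>degree p. coeff p i * (y ^ Suc i / exp y)) \<longlongrightarrow> (\<Sum>i\<le>degree p. coeff p i * 0)) at_top"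
    by (intro tendsto_intros tendsto_power_div_exp_0)
  moreover have "(\<Sum>i\<le>degree p. coeff p i * (y ^ Suc i / exp y)) = y * poly p y / exp y" for y
    by (simp add: poly_altdef sum_distrib_left sum_divide_distrib algebra_simps)
  ultimately show ?thesis by simp
qed

text \<open>\<open>flat_deriv n\<close> is the \<open>n\<close>-th derivative of the flat function \<open>x \<mapsto> exp (-1/x)\<close> (\<open>0\<close> for
  \<open>x \<le> 0\<close>), which is \<open>P\<^sub>n (1/x) exp (-1/x)\<close> for the polynomials \<open>P\<^sub>n = flat_poly n\<close>.\<close>
fun flat_poly :: "nat \<Rightarrow> real poly" where
  "flat_poly 0 = 1"
| "flat_poly (Suc n) = [:0,0,1:] * (flat_poly n - pderiv (flat_poly n))"

definition flat_deriv :: "nat \<Rightarrow> real \<Rightarrow> real" where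
  "flat_deriv n x = (if x > 0 then poly (flat_poly n) (1/x) * exp (-1/x) else 0)"

lemma flat_deriv_DERIV: "(flat_deriv n has_real_derivative flat_deriv (Suc n) x) (at x)"
proof (cases "x > 0")
  case True
  have "((\<lambda>x. poly (flat_poly n) (1/x) * exp (-1/x)) has_real_derivative
        (poly (pderiv (flat_poly n)) (1/x) * (- 1 / x^2) * exp (-1/x)
          + poly (flat_poly n) (1/x) * (exp (-1/x) * (1/x^2)))) (at x)"
    using True
    by (auto intro!: derivative_eq_intros DERIV_chain2[OF poly_DERIV]
        simp: power2_eq_square field_simps)
  moreover have "poly (pderiv (flat_poly n)) (1/x) * (- 1 / x^2) * exp (-1/x)
      + poly (flat_poly n) (1/x) * (exp (-1/x) * (1/x^2)) = flat_deriv (Suc n) x"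
    using True by (simp add: flat_deriv_def algebra_simps power2_eq_square)
  ultimately have "((\<lambda>x. poly (flat_poly n) (1/x) * exp (-1/x)) has_real_derivative
      flat_deriv (Suc n) x) (at x)"
    by simp
  then show ?thesis
    by (rule has_field_derivative_transform_within_open[of _ _ _ "{0<..}"])
      (use True in \<open>auto simp: flat_deriv_def\<close>)
next
  case False
  show ?thesis
  proof (cases "x < 0")
    case True
    have "((\<lambda>_. 0) has_real_derivative 0) (at x)" by simp
    then have "(flat_deriv n has_real_derivative 0) (at x)"
      by (rule has_field_derivative_transform_within_open[of _ _ _ "{..<0}"])
        (use True in \<open>auto simp: flat_deriv_def\<close>)
    then show ?thesis using True by (simp add: flat_deriv_def)
  next
    case False
    with \<open>\<not> x > 0\<close> have x0: "x = 0" by simp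
    have "((\<lambda>t. (flat_deriv n t - flat_deriv n 0) / (t - 0)) \<longlongrightarrow> 0) (at 0)"
    proof (rule filterlim_split_at)
      have "((\<lambda>t. 0::real) \<longlongrightarrow> 0) (at_left 0)" by simp
      then show "((\<lambda>t. (flat_deriv n t - flat_deriv n 0) / (t - 0)) \<longlongrightarrow> 0) (at_left 0)"
        by (rule Lim_transform_eventually)
          (auto simp: eventually_at_left_field flat_deriv_def intro!: exI[of _ "-1"])
    next
      have "((\<lambda>t. (\<lambda>y. y * poly (flat_poly n) y / exp y) (inverse t)) \<longlongrightarrow> 0) (at_right 0)"
        by (rule filterlim_compose[OF tendsto_mult_poly_div_exp_at_top filterlim_inverse_at_top_right])
      then show "((\<lambda>t. (flat_deriv n t - flat_deriv n 0) / (t - 0)) \<longlongrightarrow> 0) (at_right 0)"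
        by (rule Lim_transform_eventually)
          (auto simp: eventually_at_right_field flat_deriv_def exp_minus field_simps intro!: exI[of _ 1])
    qed
    then show ?thesis using x0 by (simp add: has_field_derivative_iff flat_deriv_def)
  qed
qed

lemma smooth_fun_flat: "smooth_fun (flat_deriv 0)"
  unfolding smooth_fun_def using flat_deriv_DERIV by blast

lemma flat_deriv_0: "flat_deriv 0 x = (if x > 0 then exp (-1/x) else 0)"
  by (simp add: flat_deriv_def)

lemma flat_deriv_1: "flat_deriv 1 x = (if x > 0 then exp (-1/x) / x^2 else 0)"
  by (simp add: flat_deriv_def power2_eq_square field_simps)

lemma derivs_vanish_on_open:
  assumes D: "\<And>n t. (D n has_real_derivative D (Suc n) t) (at t)"
    and S: "open S" and zero: "\<And>x. x \<in> S \<Longrightarrow> D 0 x = 0" and x: "x \<in> S"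
  shows "D n x = 0"
  using x
proof (induction n arbitrary: x)
  case 0 then show ?case using zero by simp
next
  case (Suc n)
  have "((\<lambda>_. 0) has_real_derivative 0) (at x)" by simp
  then have "(D n has_real_derivative 0) (at x)"
    by (rule has_field_derivative_transform_within_open[OF _ S Suc.prems]) (use Suc.IH in auto)
  then show ?case using DERIV_unique[OF D[of n x]] by simp
qed

lemma continuous_compact_support_bound:
  fixes f :: "real \<Rightarrow> real"
  assumes "continuous_on UNIV f" "\<And>x. r \<le> \<bar>x\<bar> \<Longrightarrow> f x = 0"
  obtains B where "\<And>x. \<bar>f x\<bar> \<le> B"
proof -
  obtain B where B: "B \<ge> 0" "\<And>x. x \<in> {-r..r} \<Longrightarrow> norm (f x) \<le> B"
    using continuous_on_compact_bound[OF compact_Icc continuous_on_subset[OF assms(1) subset_UNIV]] by blast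
  have "\<bar>f x\<bar> \<le> B" for x
  proof (cases "r \<le> \<bar>x\<bar>")
    case False
    then have "x \<in> {-r..r}" by auto
    then show ?thesis using B(2)[of x] by simp
  qed (use B(1) assms(2) in simp)
  then show ?thesis by (rule that)
qed

text \<open>The bump is \<open>b x = exp (K x) \<psi> (\<delta> + x) \<psi> (\<delta> - x)\<close> with \<open>\<psi> = flat_deriv 0\<close>. Its logarithmic
  derivative \<open>K + 1/(\<delta>+x)\<^sup>2 - 1/(\<delta>-x)\<^sup>2\<close> is at least \<open>\<kappa>\<close> for \<open>x \<le> \<delta>/2\<close> once \<open>K = \<kappa> + 4/\<delta>\<^sup>2\<close>.\<close>
lemma smooth_bump_exists:
  fixes \<delta> \<kappa> :: real
  assumes \<delta>: "0 < \<delta>"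
  obtains Db B where "\<And>n t. (Db n has_real_derivative Db (Suc n) t) (at t)"
    "\<And>n x. \<delta> < \<bar>x\<bar> \<Longrightarrow> Db n x = 0" "\<And>x. 0 \<le> Db 0 x"
    "\<And>x. \<delta> \<le> \<bar>x\<bar> \<Longrightarrow> Db 0 x = 0 \<and> Db 1 x = 0"
    "\<And>x. -\<delta> < x \<Longrightarrow> x \<le> \<delta>/2 \<Longrightarrow> 0 < Db 0 x \<and> \<kappa> * Db 0 x \<le> Db 1 x"
    "\<And>x. \<bar>Db 0 x\<bar> \<le> B \<and> \<bar>Db 1 x\<bar> \<le> B"
proof -
  define K where "K = \<kappa> + 4 / \<delta>^2"
  define \<psi> where "\<psi> = flat_deriv 0"
  define b where "b x = exp (K * x) * \<psi> (1 * x + \<delta>) * \<psi> ((-1) * x + \<delta>)" for x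
  define b' where
    "b' x = K * b x + exp (K * x) * (flat_deriv 1 (x + \<delta>) * \<psi> (\<delta> - x) - \<psi> (x + \<delta>) * flat_deriv 1 (\<delta> - x))"
    for x
  have "smooth_fun b" unfolding b_def \<psi>_def
    by (intro smooth_fun_mult smooth_fun_exp smooth_fun_affine smooth_fun_flat)
  then obtain Db where Db: "Db 0 = b" "\<And>n t. (Db n has_real_derivative Db (Suc n) t) (at t)"
    unfolding smooth_fun_def by blast
  have b_deriv: "(b has_real_derivative b' x) (at x)" for x
    unfolding b_def b'_def \<psi>_def
    by (auto intro!: derivative_eq_intros DERIV_chain2[OF flat_deriv_DERIV] simp: algebra_simps)
  have Db1: "Db 1 = b'"
  proof
    fix x show "Db 1 x = b' x"
      using DERIV_unique[OF Db(2)[of 0 x]] b_deriv[of x] Db(1) by simp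
  qed
  have zero: "b x = 0 \<and> b' x = 0" if "\<delta> \<le> \<bar>x\<bar>" for x
    using that by (auto simp: b_def b'_def \<psi>_def flat_deriv_def)
  have vanish: "Db n x = 0" if "\<delta> < \<bar>x\<bar>" for n x
    by (rule derivs_vanish_on_open[of Db "{x. \<delta> < \<bar>x\<bar>}", OF Db(2)])
      (use that zero Db(1) in \<open>auto intro!: open_Collect_less continuous_intros\<close>)
  have growth: "0 < b x \<and> \<kappa> * b x \<le> b' x" if "-\<delta> < x" "x \<le> \<delta>/2" for x
  proof -
    have xp: "0 < x + \<delta>" "0 < \<delta> - x" using that \<delta> by auto
    have b_pos: "0 < b x" using xp by (simp add: b_def \<psi>_def flat_deriv_def)
    have b'_eq: "b' x = b x * (K + 1/(x+\<delta>)^2 - 1/(\<delta>-x)^2)"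
      using xp unfolding b'_def b_def \<psi>_def flat_deriv_0 flat_deriv_1 by (simp add: field_simps)
    have "1/(\<delta>-x)^2 \<le> 4/\<delta>^2"
    proof -
      have "(\<delta>/2)^2 \<le> (\<delta>-x)^2" using that \<delta> by (intro power_mono) auto
      then have "1/(\<delta>-x)^2 \<le> 1/(\<delta>/2)^2" using \<delta> xp by (intro divide_left_mono) auto
      then show ?thesis by (simp add: power2_eq_square field_simps)
    qed
    moreover have "0 \<le> 1/(x+\<delta>)^2" by simp
    ultimately have "\<kappa> \<le> K + 1/(x+\<delta>)^2 - 1/(\<delta>-x)^2" unfolding K_def by linarith
    then have "b x * \<kappa> \<le> b x * (K + 1/(x+\<delta>)^2 - 1/(\<delta>-x)^2)"
      using b_pos by (intro mult_left_mono) auto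
    then show ?thesis using b_pos b'_eq by (simp add: mult.commute)
  qed
  have nonneg: "0 \<le> b x" for x by (simp add: b_def \<psi>_def flat_deriv_def)
  have cont: "continuous_on UNIV (Db n)" for n
    using Db(2) by (meson DERIV_isCont continuous_at_imp_continuous_on)
  obtain B0 where "\<And>x. \<bar>Db 0 x\<bar> \<le> B0"
    using continuous_compact_support_bound[OF cont, of \<delta> 0] zero Db(1) by auto
  moreover obtain B1 where "\<And>x. \<bar>Db 1 x\<bar> \<le> B1"
    using continuous_compact_support_bound[OF cont, of \<delta> 1] zero Db1 by auto
  ultimately have "\<bar>Db 0 x\<bar> \<le> max B0 B1 \<and> \<bar>Db 1 x\<bar> \<le> max B0 B1" for x
    by (meson max.coboundedI1 max.coboundedI2)
  then show ?thesis
    by (intro that[of Db "max B0 B1"]) (use Db vanish nonneg zero growth Db1 in auto)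
qed

section \<open>Lattice translations and periodisation\<close>

lemma Z2_add: "a \<in> Z2 \<Longrightarrow> b \<in> Z2 \<Longrightarrow> a + b \<in> Z2"
  by (auto simp: Z2_def)

lemma Z2_uminus: "a \<in> Z2 \<Longrightarrow> - a \<in> Z2"
  by (auto simp: Z2_def)

lemma Z2_of_int_scaleR: "a \<in> Z2 \<Longrightarrow> of_int k *\<^sub>R a \<in> Z2"
  by (auto simp: Z2_def)

lemma zero_in_Z2: "0 \<in> Z2"
  by (simp add: Z2_def)

lemma Z2_norm_less_1_imp_zero:
  assumes "a \<in> Z2" "norm a < 1"
  shows "a = 0"
proof -
  have "a $ i = 0" for i
  proof -
    have "\<bar>a $ i\<bar> < 1" using component_le_norm_cart[of a i] assms(2) by linarith
    moreover obtain z where "a $ i = of_int z" using assms(1) unfolding Z2_def by (auto elim: Ints_cases)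
    ultimately show ?thesis by simp
  qed
  then show ?thesis by (simp add: vec_eq_iff)
qed

lemma closed_Z2: "closed Z2"
proof -
  have "Z2 = (\<Inter>i. (\<lambda>v. v $ i) -` \<int>)" by (auto simp: Z2_def)
  moreover have "closed ((\<lambda>v::real^2. v $ i) -` \<int>)" for i
    by (intro closed_vimage closed_Ints continuous_intros)
  ultimately show ?thesis by (metis closed_INT)
qed

lemma quasi_periodic_of_int:
  fixes g :: "real \<Rightarrow> 'a::real_vector"
  assumes "\<And>t. g (t + 1) = g t + A"
  shows "g (t + of_int k) = g t + of_int k *\<^sub>R A"
proof -
  have nat: "g (t + of_nat n) = g t + of_nat n *\<^sub>R A" for t n
  proof (induction n arbitrary: t)
    case (Suc n)
    have "g (t + of_nat (Suc n)) = g ((t + of_nat n) + 1)" by (simp add: algebra_simps)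
    also have "\<dots> = g t + of_nat n *\<^sub>R A + A" using assms Suc by simp
    finally show ?case by (simp add: algebra_simps)
  qed simp
  show ?thesis
  proof (cases k rule: int_cases)
    case (nonneg n) then show ?thesis using nat by simp
  next
    case (neg n)
    have kk: "(of_int k :: real) = - of_nat (Suc n)" using neg by simp
    have "g (t - of_nat (Suc n) + of_nat (Suc n)) = g (t - of_nat (Suc n)) + of_nat (Suc n) *\<^sub>R A"
      by (rule nat)
    then show ?thesis unfolding kk by (simp add: algebra_simps)
  qed
qed

lemma quasi_periodic_deriv_of_int:
  fixes g :: "real \<Rightarrow> 'a::real_normed_vector"
  assumes "\<And>t. g (t + 1) = g t + A" "\<And>t. (g has_vector_derivative g' t) (at t)"
  shows "g' (t + of_int k) = g' t"
proof -
  have shift: "((\<lambda>s. s + of_int k) has_vector_derivative 1) (at t)"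
    by (auto intro!: derivative_eq_intros)
  have "((\<lambda>s. g (s + of_int k)) has_vector_derivative g' (t + of_int k)) (at t)"
    using vector_diff_chain_at[OF shift assms(2)[of "t + of_int k"]] by (simp add: o_def)
  moreover have "(\<lambda>s. g (s + of_int k)) = (\<lambda>s. g s + of_int k *\<^sub>R A)"
    using quasi_periodic_of_int[of g A, OF assms(1)] by auto
  moreover have "((\<lambda>s. g s + of_int k *\<^sub>R A) has_vector_derivative g' t) (at t)"
    using assms(2) by (auto intro!: derivative_eq_intros)
  ultimately show ?thesis using vector_derivative_unique_at by metis
qed

lemma quasi_periodic_tangent_of_int:
  assumes "\<And>t. g (t + 1) = g t + A" "\<And>t. (g has_vector_derivative g' t) (at t)"
    and "A \<in> Z2" and "\<And>x k. k \<in> Z2 \<Longrightarrow> L (x + k) = L x"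
  shows "g' (s + of_int k) \<in> L (g (s + of_int k)) \<longleftrightarrow> g' s \<in> L (g s)"
  using quasi_periodic_of_int[of g A, OF assms(1)] quasi_periodic_deriv_of_int[of g A g', OF assms(1,2)]
    assms(4) Z2_of_int_scaleR[OF assms(3)] by simp

lemma round_add_of_int: "round (x + of_int k) = round x + k"
proof -
  have "x + of_int k + 1/2 = (x + 1/2) + of_int k" by simp
  then show ?thesis unfolding round_def by (metis floor_add_int)
qed

text \<open>\<open>x - round x\<close> is the signed distance from \<open>x\<close> to the nearest integer, so \<open>h (x - round x)\<close> is
  the \<open>1\<close>-periodisation of a function \<open>h\<close> supported in \<open>[-r, r]\<close>, \<open>r < 1/2\<close>.\<close>
lemma periodise_eq:
  fixes h :: "real \<Rightarrow> 'a::zero"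
  assumes h: "\<And>x. r < \<bar>x\<bar> \<Longrightarrow> h x = 0" and x: "\<bar>x - of_int k\<bar> < 1 - r"
  shows "h (x - of_int (round x)) = h (x - of_int k)"
proof (cases "round x = k")
  case False
  then have "1 \<le> \<bar>round x - k\<bar>" by linarith
  then have "(1::real) \<le> \<bar>of_int (round x) - of_int k\<bar>"
    by (metis of_int_1_le_iff of_int_abs of_int_diff)
  then have "r < \<bar>x - of_int (round x)\<bar>" "r < \<bar>x - of_int k\<bar>"
    using x of_int_round_abs_le[of x] by linarith+
  then show ?thesis using h by simp
qed simp

lemma periodise_DERIV:
  assumes h: "\<And>n t. (h n has_real_derivative h (Suc n) t) (at t)"
    and supp: "\<And>n x. r < \<bar>x\<bar> \<Longrightarrow> h n x = 0" and r: "r < 1/2"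
  shows "((\<lambda>x. h n (x - of_int (round x))) has_real_derivative h (Suc n) (x - of_int (round x))) (at x)"
proof -
  define k where "k = round x"
  have k: "\<bar>x - of_int k\<bar> \<le> 1/2"
    using of_int_round_abs_le[of x] by (simp add: k_def abs_minus_commute)
  have "((\<lambda>y. y - of_int k) has_real_derivative 1) (at x)"
    by (auto intro!: derivative_eq_intros)
  from DERIV_chain2[OF h this]
  have "((\<lambda>y. h n (y - of_int k)) has_real_derivative h (Suc n) (x - of_int k)) (at x)"
    by simp
  then show ?thesis unfolding k_def[symmetric]
  proof (rule has_field_derivative_transform_within_open[of _ _ _ "ball x (1/2 - r)"])
    fix y assume "y \<in> ball x (1/2 - r)"
    then have "\<bar>x - y\<bar> < 1/2 - r" by (simp add: dist_real_def)
    then have "\<bar>y - of_int k\<bar> < 1 - r" using k by linarith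
    then show "h n (y - of_int k) = h n (y - of_int (round y))"
      using periodise_eq[of r "h n", OF supp] by simp
  qed (use r in auto)
qed

section \<open>Local first integrals\<close>

lemma norm_le_abs_components_2: "norm (x :: real^2) \<le> \<bar>x$1\<bar> + \<bar>x$2\<bar>"
  using norm_le_l1_cart[of x] by (simp add: sum_2)

lemma lipschitz_on_cball_of_partials:
  fixes g a b :: "real^2 \<Rightarrow> real"
  assumes der: "\<And>y. y \<in> U \<Longrightarrow> (g has_derivative (\<lambda>h. h$1 * a y + h$2 * b y)) (at y)"
    and a: "continuous_on U a" and b: "continuous_on U b" and sub: "cball p r \<subseteq> U"
  obtains \<Lambda> where "\<Lambda> \<ge> 0"
    "\<And>y y'. y \<in> cball p r \<Longrightarrow> y' \<in> cball p r \<Longrightarrow> \<bar>g y - g y'\<bar> \<le> \<Lambda> * norm (y - y')"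
proof -
  have "continuous_on (cball p r) (\<lambda>y. \<bar>a y\<bar> + \<bar>b y\<bar>)"
    using continuous_on_subset[OF a sub] continuous_on_subset[OF b sub] by (intro continuous_intros)
  then obtain \<Lambda> where \<Lambda>: "\<Lambda> \<ge> 0" "\<And>y. y \<in> cball p r \<Longrightarrow> norm (\<bar>a y\<bar> + \<bar>b y\<bar>) \<le> \<Lambda>"
    using continuous_on_compact_bound[OF compact_cball] by blast
  have "norm (g y - g y') \<le> \<Lambda> * norm (y - y')" if y: "y \<in> cball p r" "y' \<in> cball p r" for y y'
  proof (rule differentiable_bound[OF convex_cball _ _ y])
    fix x assume x: "x \<in> cball p r"
    then have "x \<in> U" using sub by auto
    then show "(g has_derivative (\<lambda>h. h$1 * a x + h$2 * b x)) (at x within cball p r)"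
      by (rule has_derivative_at_withinI[OF der])
    have "norm (h$1 * a x + h$2 * b x) \<le> \<Lambda> * norm h" for h
    proof -
      have "norm (h$1 * a x + h$2 * b x) \<le> \<bar>h$1\<bar> * \<bar>a x\<bar> + \<bar>h$2\<bar> * \<bar>b x\<bar>"
        by (simp add: abs_mult[symmetric] abs_triangle_ineq)
      also have "\<dots> \<le> norm h * \<bar>a x\<bar> + norm h * \<bar>b x\<bar>"
        by (intro add_mono mult_right_mono component_le_norm_cart) auto
      also have "\<dots> = norm h * (\<bar>a x\<bar> + \<bar>b x\<bar>)" by (simp add: algebra_simps)
      also have "\<dots> \<le> norm h * \<Lambda>" using \<Lambda>(2)[OF x] by (intro mult_left_mono) auto
      finally show ?thesis by (simp add: mult.commute)
    qed
    then show "onorm (\<lambda>h. h$1 * a x + h$2 * b x) \<le> \<Lambda>" by (intro onorm_le)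
  qed
  then show ?thesis using that \<Lambda>(1) by auto
qed

text \<open>\<open>G\<close> is Lipschitz on compact balls because the second partial derivatives of \<open>f\<close> are continuous.\<close>
lemma local_first_integral_gradient:
  assumes "local_first_integral L p U f"
  obtains G where "open U" "p \<in> U" "f p = 0"
    "\<And>y. y \<in> U \<Longrightarrow> (f has_derivative (\<lambda>h. h \<bullet> G y)) (at y)"
    "\<And>y v. y \<in> U \<Longrightarrow> v \<in> L y \<longleftrightarrow> v \<bullet> G y = 0"
    "G p \<noteq> 0" "continuous_on U G"
    "\<And>r. cball p r \<subseteq> U \<Longrightarrow> \<exists>\<Lambda>\<ge>0. \<forall>y\<in>cball p r. \<forall>y'\<in>cball p r.
        norm (G y - G y') \<le> \<Lambda> * norm (y - y')"
proof -
  have U: "open U" "p \<in> U" "smooth_on U f" "f p = 0"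
    and Lf: "\<forall>y\<in>U. \<exists>f'. (f has_derivative f') (at y) \<and> f' \<noteq> (\<lambda>h. 0) \<and> L y = {h. f' h = 0}"
    using assms unfolding local_first_integral_def by auto
  obtain P :: "bool list \<Rightarrow> real^2 \<Rightarrow> real" where P0: "\<forall>x\<in>U. P [] x = f x"
    and P: "\<And>is x. x \<in> U \<Longrightarrow> (P is has_derivative
          (\<lambda>h. h$1 * P (True # is) x + h$2 * P (False # is) x)) (at x)"
    using U(3) unfolding smooth_on_def by auto
  define G :: "real^2 \<Rightarrow> real^2" where "G y = (\<chi> i. P [i = 1] y)" for y
  have G_inner: "h \<bullet> G y = h$1 * P [True] y + h$2 * P [False] y" for h y
    by (simp add: G_def inner_vec_def sum_2)
  have f_deriv: "(f has_derivative (\<lambda>h. h \<bullet> G y)) (at y)" if y: "y \<in> U" for y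
  proof -
    have "(P [] has_derivative (\<lambda>h. h \<bullet> G y)) (at y)"
      using P[OF y, of "[]"] by (simp add: G_inner)
    then show ?thesis
      by (rule has_derivative_transform_within_open[OF _ U(1) y]) (use P0 in auto)
  qed
  have P_cont: "continuous_on U (P is)" for "is"
  proof (rule has_derivative_continuous_on)
    fix x assume "x \<in> U"
    then show "(P is has_derivative (\<lambda>h. h$1 * P (True # is) x + h$2 * P (False # is) x)) (at x within U)"
      by (rule has_derivative_at_withinI[OF P])
  qed
  have G_cont: "continuous_on U G"
    unfolding G_def by (intro continuous_on_vec_lambda P_cont)
  have ker: "v \<in> L y \<longleftrightarrow> v \<bullet> G y = 0" "G y \<noteq> 0" if y: "y \<in> U" for y v
  proof -
    obtain f' where f': "(f has_derivative f') (at y)" "f' \<noteq> (\<lambda>h. 0)" "L y = {h. f' h = 0}"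
      using Lf y by blast
    have "f' = (\<lambda>h. h \<bullet> G y)" using has_derivative_unique[OF f'(1) f_deriv[OF y]] .
    then show "v \<in> L y \<longleftrightarrow> v \<bullet> G y = 0" "G y \<noteq> 0" using f'(2,3) by auto
  qed
  have lipschitz: "\<exists>\<Lambda>\<ge>0. \<forall>y\<in>cball p r. \<forall>y'\<in>cball p r. norm (G y - G y') \<le> \<Lambda> * norm (y - y')"
    if sub: "cball p r \<subseteq> U" for r
  proof -
    obtain \<Lambda>1 where \<Lambda>1: "\<Lambda>1 \<ge> 0"
      "\<And>y y'. y \<in> cball p r \<Longrightarrow> y' \<in> cball p r \<Longrightarrow> \<bar>P [True] y - P [True] y'\<bar> \<le> \<Lambda>1 * norm (y - y')"
      using lipschitz_on_cball_of_partials[OF P P_cont P_cont sub] by blast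
    obtain \<Lambda>2 where \<Lambda>2: "\<Lambda>2 \<ge> 0"
      "\<And>y y'. y \<in> cball p r \<Longrightarrow> y' \<in> cball p r \<Longrightarrow> \<bar>P [False] y - P [False] y'\<bar> \<le> \<Lambda>2 * norm (y - y')"
      using lipschitz_on_cball_of_partials[OF P P_cont P_cont sub] by blast
    have "norm (G y - G y') \<le> (\<Lambda>1 + \<Lambda>2) * norm (y - y')"
      if "y \<in> cball p r" "y' \<in> cball p r" for y y'
      using norm_le_abs_components_2[of "G y - G y'"] \<Lambda>1(2)[OF that] \<Lambda>2(2)[OF that]
      by (simp add: G_def sum_2 distrib_right)
    then show ?thesis using \<Lambda>1(1) \<Lambda>2(1) by (intro exI[of _ "\<Lambda>1 + \<Lambda>2"]) auto
  qed
  show ?thesis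
    using that[OF U(1,2,4) f_deriv ker(1) _ G_cont lipschitz] ker(2)[OF U(2)] by blast
qed

lemma sgn_continuous_nonzero_eq:
  fixes h :: "real \<Rightarrow> real"
  assumes h: "continuous_on {a..b} h" "\<And>y. y \<in> {a..b} \<Longrightarrow> h y \<noteq> 0" and x: "a \<le> x" "x \<le> b"
  shows "sgn (h x) = sgn (h a)"
proof -
  have h': "continuous_on {a..x} h" using h(1) x by (auto intro: continuous_on_subset)
  have "\<not> (\<exists>y. a \<le> y \<and> y \<le> x \<and> h y = 0)" using h(2) x by auto
  then have "0 < h x \<longleftrightarrow> 0 < h a"
    using IVT'[of h a 0 x] IVT2'[of h x 0 a] h' x(1) by force
  then show ?thesis using h(2)[of x] h(2)[of a] x by (auto simp: sgn_if)
qed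

text \<open>By the mean value theorem \<open>\<phi>\<close> has the sign of \<open>-\<phi>'\<close> left of \<open>t0\<close> and of \<open>\<phi>'\<close> right of \<open>t0\<close>; as
  \<open>\<phi>\<close> takes both signs, the two one-sided signs of \<open>\<phi>'\<close> agree.\<close>
lemma sign_change_imp_deriv_sgn_constant:
  fixes \<phi> \<phi>' :: "real \<Rightarrow> real"
  assumes d: "0 < d"
    and der: "\<And>s. \<bar>s - t0\<bar> \<le> d \<Longrightarrow> (\<phi> has_real_derivative \<phi>' s) (at s)"
    and cont: "continuous_on {t0-d..t0+d} \<phi>'"
    and nz: "\<And>s. \<bar>s - t0\<bar> \<le> d \<Longrightarrow> s \<noteq> t0 \<Longrightarrow> \<phi>' s \<noteq> 0"
    and zero: "\<phi> t0 = 0"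
    and neg: "\<bar>s1 - t0\<bar> < d" "\<phi> s1 < 0" and pos: "\<bar>s2 - t0\<bar> < d" "0 < \<phi> s2"
    and s: "\<bar>s - t0\<bar> \<le> d" "s \<noteq> t0"
  shows "sgn (\<phi>' s) = sgn (\<phi>' (t0 + d))"
proof -
  define \<sigma>l where "\<sigma>l = sgn (\<phi>' (t0 - d))"
  define \<sigma>r where "\<sigma>r = sgn (\<phi>' (t0 + d))"
  have left: "sgn (\<phi>' s) = \<sigma>l" if "t0 - d \<le> s" "s < t0" for s
    unfolding \<sigma>l_def
    by (rule sgn_continuous_nonzero_eq[where b = s]) (use that nz in \<open>auto intro: continuous_on_subset[OF cont]\<close>)
  have right: "sgn (\<phi>' s) = \<sigma>r" if "t0 < s" "s \<le> t0 + d" for s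
    unfolding \<sigma>r_def
    by (rule sgn_continuous_nonzero_eq[where a = s and b = "t0 + d", symmetric]) (use that nz in \<open>auto intro: continuous_on_subset[OF cont]\<close>)
  have value_sgn: "sgn (\<phi> s) = (if s < t0 then - \<sigma>l else \<sigma>r)" if s: "\<bar>s - t0\<bar> < d" "s \<noteq> t0" for s
  proof (cases "s < t0")
    case True
    then obtain z where z: "s < z" "z < t0" "\<phi> t0 - \<phi> s = (t0 - s) * \<phi>' z"
      using MVT2[of s t0 \<phi> \<phi>'] der s(1) by force
    then have "\<phi> s = - ((t0 - s) * \<phi>' z)" using zero by simp
    then show ?thesis using True left[of z] z s by (simp add: sgn_mult)
  next
    case False
    then have "t0 < s" using s(2) by simp
    then obtain z where z: "t0 < z" "z < s" "\<phi> s - \<phi> t0 = (s - t0) * \<phi>' z"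
      using MVT2[of t0 s \<phi> \<phi>'] der s(1) by force
    then have "\<phi> s = (s - t0) * \<phi>' z" using zero by simp
    then show ?thesis using False right[of z] z s by (simp add: sgn_mult)
  qed
  have "s1 \<noteq> t0" "s2 \<noteq> t0" using neg pos zero by auto
  then have v1: "(if s1 < t0 then - \<sigma>l else \<sigma>r) = -1" and v2: "(if s2 < t0 then - \<sigma>l else \<sigma>r) = 1"
    using value_sgn[OF neg(1)] value_sgn[OF pos(1)] neg(2) pos(2) by auto
  have "\<sigma>l \<in> {-1, 1}" "\<sigma>r \<in> {-1, 1}" using nz d by (auto simp: \<sigma>l_def \<sigma>r_def sgn_if)
  then have "\<sigma>l = \<sigma>r" using v1 v2 by (cases "s1 < t0"; cases "s2 < t0") auto
  show ?thesis
  proof (cases "s < t0")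
    case True
    then show ?thesis using left[of s] s \<open>\<sigma>l = \<sigma>r\<close> by (simp add: \<sigma>r_def)
  next
    case False
    then show ?thesis using right[of s] s by (simp add: \<sigma>r_def)
  qed
qed

locale gradient_frame =
  fixes L :: "real^2 \<Rightarrow> (real^2) set" and p :: "real^2" and U :: "(real^2) set"
    and F :: "real^2 \<Rightarrow> real" and G :: "real^2 \<Rightarrow> real^2" and \<rho> \<Lambda> \<Gamma> :: real and w :: "real^2"
  assumes open_U: "open U" and F_zero: "F p = 0"
    and rho: "0 < \<rho>" "\<rho> \<le> 1/4" and cball_subset: "cball p \<rho> \<subseteq> U"
    and F_deriv: "\<And>y. y \<in> U \<Longrightarrow> (F has_derivative (\<lambda>h. h \<bullet> G y)) (at y)"
    and G_cont: "continuous_on U G"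
    and L_ker: "\<And>y v. y \<in> U \<Longrightarrow> v \<in> L y \<longleftrightarrow> v \<bullet> G y = 0"
    and G_lipschitz: "\<And>y y'. y \<in> cball p \<rho> \<Longrightarrow> y' \<in> cball p \<rho> \<Longrightarrow> norm (G y - G y') \<le> \<Lambda> * norm (y - y')"
    and Lambda_nonneg: "0 \<le> \<Lambda>"
    and G_bound: "\<And>y. y \<in> cball p \<rho> \<Longrightarrow> norm (G y) \<le> \<Gamma>"
    and w_nonzero: "w \<noteq> 0"
    and w_transverse: "\<And>y. y \<in> cball p \<rho> \<Longrightarrow> norm w ^ 2 / 2 \<le> w \<bullet> G y"

lemma gradient_frame_exists:
  assumes "local_first_integral L p U f"
  obtains G \<rho> \<Lambda> \<Gamma> w where "gradient_frame L p U f G \<rho> \<Lambda> \<Gamma> w"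
proof -
  obtain G where U: "open U" "p \<in> U" "f p = 0"
    and f_deriv: "\<And>y. y \<in> U \<Longrightarrow> (f has_derivative (\<lambda>h. h \<bullet> G y)) (at y)"
    and ker: "\<And>y v. y \<in> U \<Longrightarrow> v \<in> L y \<longleftrightarrow> v \<bullet> G y = 0"
    and Gp: "G p \<noteq> 0" and G_cont: "continuous_on U G"
    and lipschitz: "\<And>r. cball p r \<subseteq> U \<Longrightarrow> \<exists>\<Lambda>\<ge>0. \<forall>y\<in>cball p r. \<forall>y'\<in>cball p r.
        norm (G y - G y') \<le> \<Lambda> * norm (y - y')"
    using local_first_integral_gradient[OF assms] by blast
  define w where "w = G p"
  obtain \<rho>0 where \<rho>0: "\<rho>0 > 0" "cball p \<rho>0 \<subseteq> U" using U(1,2) open_contains_cball by blast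
  have "continuous_on U (\<lambda>y. w \<bullet> G y)" using G_cont by (intro continuous_intros)
  moreover have "0 < norm w ^ 2 / 2" using Gp by (simp add: w_def)
  ultimately obtain \<rho>1 where \<rho>1: "\<rho>1 > 0"
    "\<And>y. y \<in> U \<Longrightarrow> dist y p < \<rho>1 \<Longrightarrow> dist (w \<bullet> G y) (w \<bullet> G p) < norm w ^ 2 / 2"
    using U(2) unfolding continuous_on_iff by metis
  define \<rho> where "\<rho> = min (min (\<rho>0/2) (\<rho>1/2)) (1/4)"
  have \<rho>: "0 < \<rho>" "\<rho> \<le> 1/4" "cball p \<rho> \<subseteq> U" using \<rho>0 \<rho>1 by (auto simp: \<rho>_def)
  have w_transverse: "norm w ^ 2 / 2 \<le> w \<bullet> G y" if "y \<in> cball p \<rho>" for y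
  proof -
    have "y \<in> U" "dist y p < \<rho>1" using that \<rho> \<rho>1 by (auto simp: \<rho>_def dist_commute)
    then have "\<bar>w \<bullet> G y - norm w ^ 2\<bar> < norm w ^ 2 / 2"
      using \<rho>1(2) by (simp add: dist_real_def w_def power2_norm_eq_inner)
    then show ?thesis by linarith
  qed
  obtain \<Lambda> where "\<Lambda> \<ge> 0" "\<And>y y'. y \<in> cball p \<rho> \<Longrightarrow> y' \<in> cball p \<rho> \<Longrightarrow>
      norm (G y - G y') \<le> \<Lambda> * norm (y - y')"
    using lipschitz[OF \<rho>(3)] by blast
  moreover obtain \<Gamma> where "\<And>y. y \<in> cball p \<rho> \<Longrightarrow> norm (G y) \<le> \<Gamma>"
    using continuous_on_compact_bound[OF compact_cball continuous_on_subset[OF G_cont \<rho>(3)]] by blast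
  ultimately have "gradient_frame L p U f G \<rho> \<Lambda> \<Gamma> w"
    using U \<rho> f_deriv G_cont ker w_transverse Gp by unfold_locales (auto simp: w_def)
  then show ?thesis by (rule that)
qed

lemma gradient_frame_uminus:
  assumes "gradient_frame L p U F G \<rho> \<Lambda> \<Gamma> w"
  shows "gradient_frame L p U (\<lambda>y. - F y) (\<lambda>y. - G y) \<rho> \<Lambda> \<Gamma> (- w)"
proof -
  interpret gradient_frame L p U F G \<rho> \<Lambda> \<Gamma> w by fact
  show ?thesis
  proof unfold_locales
    show "((\<lambda>y. - F y) has_derivative (\<lambda>h. h \<bullet> - G y)) (at y)" if "y \<in> U" for y
      using has_derivative_minus[OF F_deriv[OF that]] by simp
    show "norm (- G y - - G y') \<le> \<Lambda> * norm (y - y')" if "y \<in> cball p \<rho>" "y' \<in> cball p \<rho>" for y y'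
      using G_lipschitz[OF that] by (simp add: norm_minus_commute)
  qed (use open_U F_zero rho cball_subset G_cont L_ker Lambda_nonneg G_bound w_nonzero w_transverse
      in \<open>auto intro: continuous_intros\<close>)
qed

context gradient_frame
begin

lemma DERIV_along_curve:
  assumes "(c has_vector_derivative c') (at s)" "c s \<in> U"
  shows "((\<lambda>s. F (c s)) has_real_derivative c' \<bullet> G (c s)) (at s)"
proof -
  have "((\<lambda>s. F (c s)) has_derivative (\<lambda>x. (x *\<^sub>R c') \<bullet> G (c s))) (at s)"
    using has_derivative_compose[OF assms(1)[unfolded has_vector_derivative_def] F_deriv[OF assms(2)]] .
  moreover have "(\<lambda>x. (x *\<^sub>R c') \<bullet> G (c s)) = (*) (c' \<bullet> G (c s))" by (auto simp: fun_eq_iff)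
  ultimately show ?thesis by (simp add: has_field_derivative_def)
qed

lemma crossing_orientation:
  assumes c: "\<And>s. (c has_vector_derivative c' s) (at s)" "continuous_on UNIV c'" "c t0 = p"
    and \<delta>: "0 < \<delta>" and in_U: "\<And>s. \<bar>s - t0\<bar> \<le> \<delta> \<Longrightarrow> c s \<in> U"
    and no_tangency: "\<And>s. \<bar>s - t0\<bar> \<le> \<delta> \<Longrightarrow> s \<noteq> t0 \<Longrightarrow> c' s \<notin> L (c s)"
    and neg: "\<bar>s1 - t0\<bar> < \<delta>" "F (c s1) < 0" and pos: "\<bar>s2 - t0\<bar> < \<delta>" "0 < F (c s2)"
  obtains F' G' w' where "gradient_frame L p U F' G' \<rho> \<Lambda> \<Gamma> w'"
    "\<And>s. \<bar>s - t0\<bar> \<le> \<delta> \<Longrightarrow> s \<noteq> t0 \<Longrightarrow> 0 < c' s \<bullet> G' (c s)"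
proof -
  define \<phi>' where "\<phi>' s = c' s \<bullet> G (c s)" for s
  have "continuous_on UNIV c"
    using c(1) by (meson continuous_at_imp_continuous_on has_vector_derivative_continuous)
  then have "continuous_on {t0-\<delta>..t0+\<delta>} (\<lambda>s. G (c s))"
    using in_U by (intro continuous_on_compose2[OF G_cont]) (auto intro: continuous_on_subset simp: abs_le_iff)
  then have cont: "continuous_on {t0-\<delta>..t0+\<delta>} \<phi>'"
    unfolding \<phi>'_def using c(2) by (intro continuous_intros continuous_on_subset[OF c(2)]) auto
  have nonzero: "\<phi>' s \<noteq> 0" if "\<bar>s - t0\<bar> \<le> \<delta>" "s \<noteq> t0" for s
    using no_tangency[OF that] L_ker[OF in_U[OF that(1)]] by (simp add: \<phi>'_def)
  have sgn_eq: "sgn (\<phi>' s) = sgn (\<phi>' (t0 + \<delta>))" if "\<bar>s - t0\<bar> \<le> \<delta>" "s \<noteq> t0" for s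
  proof (rule sign_change_imp_deriv_sgn_constant[OF \<delta> _ cont nonzero _ neg pos that])
    show "((\<lambda>s. F (c s)) has_real_derivative \<phi>' s) (at s)" if "\<bar>s - t0\<bar> \<le> \<delta>" for s
      unfolding \<phi>'_def using that by (intro DERIV_along_curve c(1) in_U)
  qed (use F_zero c(3) in auto)
  show ?thesis
  proof (cases "0 < \<phi>' (t0 + \<delta>)")
    case True
    have "0 < c' s \<bullet> G (c s)" if "\<bar>s - t0\<bar> \<le> \<delta>" "s \<noteq> t0" for s
      using sgn_eq[OF that] True by (simp add: \<phi>'_def sgn_1_pos)
    then show ?thesis by (rule that[OF gradient_frame_axioms])
  next
    case False
    then have "\<phi>' (t0 + \<delta>) < 0" using nonzero[of "t0 + \<delta>"] \<delta> by fastforce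
    then have "0 < c' s \<bullet> - G (c s)" if "\<bar>s - t0\<bar> \<le> \<delta>" "s \<noteq> t0" for s
      using sgn_eq[OF that] by (simp add: \<phi>'_def sgn_1_neg)
    then show ?thesis by (rule that[OF gradient_frame_uminus[OF gradient_frame_axioms]])
  qed
qed

end

section \<open>Pushing a curve off a crossing tangency\<close>

locale tangency_removal = gradient_frame L "\<gamma> t0" U F G \<rho> \<Lambda> \<Gamma> w
  for L :: "real^2 \<Rightarrow> (real^2) set" and \<gamma> :: "real \<Rightarrow> real^2" and t0 :: real
    and U F G \<rho> \<Lambda> \<Gamma> w +
  fixes A :: "real^2" and D :: "nat \<Rightarrow> real \<Rightarrow> real^2" and \<delta> M :: real
    and Db :: "nat \<Rightarrow> real \<Rightarrow> real" and B c m \<epsilon> :: real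
  assumes emb: "embedded_loop A \<gamma>" and A_Z2: "A \<in> Z2"
    and L_periodic: "\<And>x k. k \<in> Z2 \<Longrightarrow> L (x + k) = L x"
    and D0: "D 0 = \<gamma>" and D_deriv: "\<And>n t. (D n has_vector_derivative D (Suc n) t) (at t)"
    and delta: "0 < \<delta>" "\<delta> \<le> 1/4"
    and near: "\<And>s. \<bar>s - t0\<bar> \<le> \<delta> \<Longrightarrow> \<gamma> s \<in> cball (\<gamma> t0) (\<rho>/2)"
    and transverse: "\<And>s. \<bar>s - t0\<bar> \<le> \<delta> \<Longrightarrow> s \<noteq> t0 \<Longrightarrow> 0 < D 1 s \<bullet> G (\<gamma> s)"
    and tangent: "D 1 t0 \<in> L (\<gamma> t0)"
    and speed_bound: "\<And>s. \<bar>s - t0\<bar> \<le> \<delta> \<Longrightarrow> norm (D 1 s) \<le> M"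
    and bump_deriv: "\<And>n t. (Db n has_real_derivative Db (Suc n) t) (at t)"
    and bump_support: "\<And>n x. \<delta>/2 < \<bar>x\<bar> \<Longrightarrow> Db n x = 0"
    and bump_nonneg: "\<And>x. 0 \<le> Db 0 x"
    and bump_boundary: "\<And>x. \<delta>/2 \<le> \<bar>x\<bar> \<Longrightarrow> Db 0 x = 0 \<and> Db 1 x = 0"
    and bump_growth: "\<And>x. -(\<delta>/2) < x \<Longrightarrow> x \<le> \<delta>/4 \<Longrightarrow>
      0 < Db 0 x \<and> (2 * \<Lambda> * M / norm w + 1) * Db 0 x \<le> Db 1 x"
    and bump_bound: "\<And>x. \<bar>Db 0 x\<bar> \<le> B \<and> \<bar>Db 1 x\<bar> \<le> B"
    and c_pos: "0 < c" and c_bound: "\<And>s. t0 + \<delta>/4 \<le> s \<Longrightarrow> s \<le> t0 + \<delta>/2 \<Longrightarrow> c \<le> D 1 s \<bullet> G (\<gamma> s)"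
    and m_pos: "0 < m"
    and m_bound: "\<And>s d. \<bar>s - t0\<bar> \<le> \<delta>/2 \<Longrightarrow> \<delta>/2 \<le> \<bar>d\<bar> \<Longrightarrow> \<bar>d\<bar> \<le> 1/2 \<Longrightarrow>
      m \<le> infdist (\<gamma> s - \<gamma> (s - d)) Z2"
    and eps_pos: "0 < \<epsilon>"
    and eps_small: "\<epsilon> * B * norm w \<le> \<rho>/2" "\<epsilon> * B * norm w * (\<Lambda> * M + \<Gamma>) < c"
      "2 * (\<epsilon> * B * norm w) < m"
begin

definition bump :: "nat \<Rightarrow> real \<Rightarrow> real" where
  "bump n s = Db n (s - t0 - of_int (round (s - t0)))"

text \<open>\<open>pushed 0\<close> is the perturbed curve and \<open>pushed n\<close> its \<open>n\<close>-th derivative.\<close>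
definition pushed :: "nat \<Rightarrow> real \<Rightarrow> real^2" where
  "pushed n s = D n s + (\<epsilon> * bump n s) *\<^sub>R w"

lemma bump_eq_shift: "\<bar>s - t0 - of_int k\<bar> < 1 - \<delta>/2 \<Longrightarrow> bump n s = Db n (s - t0 - of_int k)"
  using periodise_eq[of "\<delta>/2" "Db n", OF bump_support, of "s - t0" k] by (simp add: bump_def)

lemma bump_eq_near: "\<bar>s - t0\<bar> \<le> \<delta> \<Longrightarrow> bump n s = Db n (s - t0)"
  using bump_eq_shift[of s 0 n] delta by simp

lemma bump_DERIV: "(bump n has_real_derivative bump (Suc n) t) (at t)"
proof -
  have "((\<lambda>s. s - t0) has_real_derivative 1) (at t)" by (auto intro!: derivative_eq_intros)
  from DERIV_chain2[OF periodise_DERIV[of Db "\<delta>/2", OF bump_deriv bump_support] this] delta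
  show ?thesis by (simp add: bump_def[abs_def])
qed

lemma bump_periodic: "bump n (s + 1) = bump n s"
  using round_add_of_int[of "s - t0" 1] by (simp add: bump_def algebra_simps)

lemma bump_0_bound: "\<bar>bump 0 s\<bar> \<le> B"
  using bump_bound by (simp add: bump_def)

lemma pushed_deriv: "(pushed n has_vector_derivative pushed (Suc n) t) (at t)"
proof -
  have "((\<lambda>s. \<epsilon> * bump n s) has_real_derivative \<epsilon> * bump (Suc n) t) (at t)"
    using bump_DERIV by (auto intro!: derivative_eq_intros)
  then have "((\<lambda>s. (\<epsilon> * bump n s) *\<^sub>R w) has_vector_derivative (\<epsilon> * bump (Suc n) t) *\<^sub>R w) (at t)"
    using has_vector_derivative_scaleR[of "\<lambda>s. \<epsilon> * bump n s" _ t UNIV "\<lambda>_. w" 0] by simp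
  then show ?thesis unfolding pushed_def[abs_def] using D_deriv by (intro has_vector_derivative_add)
qed

lemma pushed_deriv_0: "(pushed 0 has_vector_derivative pushed 1 t) (at t)"
  using pushed_deriv[of 0 t] by simp

lemma \<gamma>_deriv: "(\<gamma> has_vector_derivative D 1 t) (at t)"
  using D_deriv[of 0 t] by (simp add: D0)

lemma vector_derivative_pushed: "vector_derivative (pushed 0) (at t) = pushed 1 t"
  using pushed_deriv_0 by (rule vector_derivative_at)

lemma vector_derivative_\<gamma>: "vector_derivative \<gamma> (at t) = D 1 t"
  using \<gamma>_deriv by (rule vector_derivative_at)

lemma \<gamma>_periodic: "\<gamma> (t + 1) = \<gamma> t + A"
  using emb by (simp add: embedded_loop_def)

lemma pushed_periodic: "pushed 0 (t + 1) = pushed 0 t + A"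
  by (simp add: pushed_def D0 \<gamma>_periodic bump_periodic)

lemma pushed_shift: "pushed 0 (t + of_int k) = pushed 0 t + of_int k *\<^sub>R A"
  using quasi_periodic_of_int[of "pushed 0" A] pushed_periodic by blast

lemma pushed_tangent_shift:
  "pushed 1 (s + of_int k) \<in> L (pushed 0 (s + of_int k)) \<longleftrightarrow> pushed 1 s \<in> L (pushed 0 s)"
  using quasi_periodic_tangent_of_int[OF pushed_periodic pushed_deriv_0 A_Z2 L_periodic] .

lemma \<gamma>_tangent_shift: "D 1 (s + of_int k) \<in> L (\<gamma> (s + of_int k)) \<longleftrightarrow> D 1 s \<in> L (\<gamma> s)"
  using quasi_periodic_tangent_of_int[OF \<gamma>_periodic \<gamma>_deriv A_Z2 L_periodic] .

lemma pushed_near_eq: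
  assumes "\<bar>s - t0\<bar> \<le> \<delta>"
  shows "pushed 0 s = \<gamma> s + (\<epsilon> * Db 0 (s - t0)) *\<^sub>R w" "pushed 1 s = D 1 s + (\<epsilon> * Db 1 (s - t0)) *\<^sub>R w"
  using bump_eq_near[OF assms] by (simp_all add: pushed_def D0)

lemma pushed_far_eq:
  assumes "\<delta>/2 \<le> \<bar>s - t0 - of_int (round (s - t0))\<bar>"
  shows "pushed 0 s = \<gamma> s" "pushed 1 s = D 1 s"
  using bump_boundary[OF assms] by (simp_all add: pushed_def bump_def D0)

lemma pushed_displacement:
  assumes "\<bar>s - t0\<bar> \<le> \<delta>"
  shows "norm (pushed 0 s - \<gamma> s) = \<epsilon> * Db 0 (s - t0) * norm w"
    and "norm (pushed 0 s - \<gamma> s) \<le> \<rho>/2"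
proof -
  show *: "norm (pushed 0 s - \<gamma> s) = \<epsilon> * Db 0 (s - t0) * norm w"
    using pushed_near_eq(1)[OF assms] eps_pos bump_nonneg by simp
  have "\<epsilon> * Db 0 (s - t0) * norm w \<le> \<epsilon> * B * norm w"
    using bump_bound[of "s - t0"] eps_pos by (intro mult_right_mono mult_left_mono) auto
  then show "norm (pushed 0 s - \<gamma> s) \<le> \<rho>/2" using * eps_small(1) by linarith
qed

lemma pushed_near: "\<bar>s - t0\<bar> \<le> \<delta> \<Longrightarrow> pushed 0 s \<in> cball (\<gamma> t0) \<rho>"
  using near[of s] pushed_displacement(2)[of s] dist_triangle[of "\<gamma> t0" "pushed 0 s" "\<gamma> s"]
  by (auto simp: dist_norm norm_minus_commute)

lemma centre_in_U: "\<gamma> t0 \<in> U"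
  using cball_subset rho by auto

lemma M_nonneg: "0 \<le> M"
  using speed_bound[of t0] delta norm_ge_zero[of "D 1 t0"] by linarith

lemma gradient_error_near:
  assumes s: "\<bar>s - t0\<bar> \<le> \<delta>"
  shows "\<bar>D 1 s \<bullet> (G (pushed 0 s) - G (\<gamma> s))\<bar> \<le> \<Lambda> * M * (\<epsilon> * Db 0 (s - t0) * norm w)"
proof -
  have "\<bar>D 1 s \<bullet> (G (pushed 0 s) - G (\<gamma> s))\<bar> \<le> norm (D 1 s) * norm (G (pushed 0 s) - G (\<gamma> s))"
    by (rule Cauchy_Schwarz_ineq2)
  also have "\<dots> \<le> M * (\<Lambda> * norm (pushed 0 s - \<gamma> s))"
    using speed_bound[OF s] G_lipschitz[OF pushed_near[OF s]] near[OF s] rho M_nonneg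
    by (intro mult_mono) auto
  finally show ?thesis unfolding pushed_displacement(1)[OF s] by (simp add: algebra_simps)
qed

text \<open>This is where the tangency at \<open>t0\<close> disappears.\<close>
lemma pushed_transverse_near:
  assumes s: "\<bar>s - t0\<bar> \<le> \<delta>"
  shows "0 < pushed 1 s \<bullet> G (pushed 0 s)"
proof -
  define x a0 a1 where "x = s - t0" and "a0 = Db 0 x" and "a1 = Db 1 x"
  define err where "err = D 1 s \<bullet> (G (pushed 0 s) - G (\<gamma> s))"
  have split: "pushed 1 s \<bullet> G (pushed 0 s) = D 1 s \<bullet> G (\<gamma> s) + err + \<epsilon> * a1 * (w \<bullet> G (pushed 0 s))"
    unfolding pushed_near_eq(2)[OF s] err_def a1_def x_def by (simp add: algebra_simps inner_diff_right)
  have err: "\<bar>err\<bar> \<le> \<Lambda> * M * (\<epsilon> * a0 * norm w)"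
    using gradient_error_near[OF s] by (simp add: err_def a0_def x_def)
  have old_nonneg: "0 \<le> D 1 s \<bullet> G (\<gamma> s)"
  proof (cases "s = t0")
    case True
    then show ?thesis using tangent L_ker[OF centre_in_U] by simp
  qed (use transverse[OF s] in \<open>simp add: less_imp_le\<close>)
  have w_pos: "norm w ^ 2 / 2 \<le> w \<bullet> G (pushed 0 s)" using w_transverse[OF pushed_near[OF s]] .
  have nw: "0 < norm w" using w_nonzero by simp
  consider "\<delta>/2 \<le> \<bar>x\<bar>" | "-(\<delta>/2) < x" "x \<le> \<delta>/4" | "t0 + \<delta>/4 \<le> s" "s \<le> t0 + \<delta>/2"
    unfolding x_def by linarith
  then show ?thesis
  proof cases
    case 1
    then have "a0 = 0" "a1 = 0" "s \<noteq> t0" using bump_boundary delta by (auto simp: a0_def a1_def x_def)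
    then show ?thesis using split err transverse[OF s] by simp
  next
    case 2
    text \<open>Where the bump grows, its derivative term dominates the error.\<close>
    have a: "0 < a0" "(2 * \<Lambda> * M / norm w + 1) * a0 \<le> a1"
      using bump_growth[OF 2] by (auto simp: a0_def a1_def)
    have "0 \<le> 2 * \<Lambda> * M / norm w" using Lambda_nonneg M_nonneg by simp
    then have a1: "0 \<le> a1" using a by (smt (verit) mult_nonneg_nonneg)
    have "\<epsilon> * ((2 * \<Lambda> * M / norm w + 1) * a0) * (norm w ^ 2 / 2) \<le> \<epsilon> * a1 * (w \<bullet> G (pushed 0 s))"
      using a a1 eps_pos w_pos by (intro mult_mono mult_left_mono) auto
    moreover have "\<epsilon> * ((2 * \<Lambda> * M / norm w + 1) * a0) * (norm w ^ 2 / 2)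
        = \<Lambda> * M * (\<epsilon> * a0 * norm w) + \<epsilon> * a0 * norm w ^ 2 / 2"
      using nw by (simp add: field_simps power2_eq_square)
    moreover have "0 < \<epsilon> * a0 * norm w ^ 2 / 2" using eps_pos a nw by simp
    ultimately show ?thesis using split err old_nonneg by linarith
  next
    case 3
    text \<open>Elsewhere the old transversality dominates the small push.\<close>
    have "\<bar>\<epsilon> * a1 * (w \<bullet> G (pushed 0 s))\<bar> \<le> \<epsilon> * B * (norm w * \<Gamma>)"
    proof -
      have "\<bar>w \<bullet> G (pushed 0 s)\<bar> \<le> norm w * \<Gamma>"
        using Cauchy_Schwarz_ineq2[of w] G_bound[OF pushed_near[OF s]]
        by (meson mult_left_mono norm_ge_zero order_trans)
      moreover have "0 \<le> B" using bump_bound[of x] by linarith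
      ultimately have "\<bar>a1\<bar> * \<bar>w \<bullet> G (pushed 0 s)\<bar> \<le> B * (norm w * \<Gamma>)"
        using bump_bound[of x] by (intro mult_mono) (auto simp: a1_def)
      then show ?thesis using eps_pos by (simp add: abs_mult mult.assoc mult_left_mono)
    qed
    moreover have "\<Lambda> * M * (\<epsilon> * a0 * norm w) \<le> \<Lambda> * M * (\<epsilon> * B * norm w)"
      using bump_bound[of x] Lambda_nonneg M_nonneg eps_pos
      by (intro mult_left_mono mult_right_mono) (auto simp: a0_def)
    moreover have "c \<le> D 1 s \<bullet> G (\<gamma> s)" using c_bound[OF 3] .
    ultimately show ?thesis using split err eps_small(2) by (simp add: algebra_simps)
  qed
qed

lemma pushed_inj_near:
  assumes "\<bar>s1 - t0\<bar> \<le> \<delta>" "\<bar>s2 - t0\<bar> \<le> \<delta>" "pushed 0 s1 = pushed 0 s2"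
  shows "s1 = s2"
proof -
  have "F (pushed 0 s1) < F (pushed 0 s2)" if "s1 < s2" "\<bar>s1 - t0\<bar> \<le> \<delta>" "\<bar>s2 - t0\<bar> \<le> \<delta>" for s1 s2
  proof -
    have "((\<lambda>s. F (pushed 0 s)) has_real_derivative pushed 1 x \<bullet> G (pushed 0 x)) (at x)"
      if "s1 \<le> x" "x \<le> s2" for x
      using that \<open>\<bar>s1 - t0\<bar> \<le> \<delta>\<close> \<open>\<bar>s2 - t0\<bar> \<le> \<delta>\<close> pushed_near[of x] cball_subset
      by (intro DERIV_along_curve pushed_deriv_0) auto
    from MVT2[OF \<open>s1 < s2\<close> this] obtain z where z: "s1 < z" "z < s2"
      "F (pushed 0 s2) - F (pushed 0 s1) = (s2 - s1) * (pushed 1 z \<bullet> G (pushed 0 z))" by blast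
    have "0 < pushed 1 z \<bullet> G (pushed 0 z)" using z that by (intro pushed_transverse_near) auto
    then show ?thesis using z(3) \<open>s1 < s2\<close> by (smt (verit) mult_pos_pos)
  qed
  then show ?thesis using assms by (metis less_irrefl linorder_neqE_linordered_idom)
qed

lemma pushed_embedding_centre:
  assumes s: "\<bar>s - t0\<bar> \<le> \<delta>/2" and z: "pushed 0 s - pushed 0 t \<in> Z2"
  shows "s - t \<in> \<int>"
proof -
  define j where "j = round (t - s)"
  define t' where "t' = t - of_int j"
  have "s - t' = of_int j - (t - s)" by (simp add: t'_def)
  then have t': "\<bar>s - t'\<bar> \<le> 1/2" using of_int_round_abs_le[of "t - s"] unfolding j_def by argo
  have "pushed 0 t = pushed 0 t' + of_int j *\<^sub>R A" using pushed_shift[of t' j] by (simp add: t'_def)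
  then have z': "pushed 0 s - pushed 0 t' \<in> Z2"
    using Z2_add[OF z Z2_of_int_scaleR[OF A_Z2, of j]] by (simp add: algebra_simps)
  have "s = t'"
  proof (cases "\<bar>s - t'\<bar> < \<delta>/2")
    case True
    then have near_s: "\<bar>s - t0\<bar> \<le> \<delta>" "\<bar>t' - t0\<bar> \<le> \<delta>" using s by linarith+
    have "norm (pushed 0 s - pushed 0 t') \<le> \<rho> + \<rho>"
      using pushed_near[OF near_s(1)] pushed_near[OF near_s(2)]
        norm_triangle_ineq[of "pushed 0 s - \<gamma> t0" "\<gamma> t0 - pushed 0 t'"]
      by (auto simp: dist_norm norm_minus_commute)
    then have "pushed 0 s = pushed 0 t'" using Z2_norm_less_1_imp_zero[OF z'] rho by simp
    then show ?thesis using pushed_inj_near near_s by blast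
  next
    case False
    text \<open>Far apart in the parameter, the translates of \<open>\<gamma>\<close> are \<open>m\<close>-separated, and the push moves
      points by less than \<open>m/2\<close>.\<close>
    have "m \<le> infdist (\<gamma> s - \<gamma> (s - (s - t'))) Z2"
      using False t' s by (intro m_bound) auto
    also have "\<dots> \<le> dist (\<gamma> s - \<gamma> t') (pushed 0 s - pushed 0 t')" using infdist_le[OF z'] by simp
    also have "\<dots> = norm ((\<epsilon> * (bump 0 t' - bump 0 s)) *\<^sub>R w)"
      by (simp add: dist_norm pushed_def D0 algebra_simps)
    also have "\<dots> = \<epsilon> * \<bar>bump 0 s - bump 0 t'\<bar> * norm w"
      using eps_pos by (simp add: abs_mult abs_minus_commute)
    also have "\<dots> \<le> \<epsilon> * (2 * B) * norm w"
      using bump_0_bound[of s] bump_0_bound[of t'] eps_pos by (intro mult_right_mono mult_left_mono) auto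
    finally show ?thesis using eps_small(3) by simp
  qed
  then show ?thesis by (simp add: t'_def)
qed

lemma pushed_embedding:
  assumes z: "pushed 0 s - pushed 0 t \<in> Z2"
  shows "s - t \<in> \<int>"
proof -
  have supported: "s - t \<in> \<int>"
    if s: "\<bar>s - t0 - of_int (round (s - t0))\<bar> \<le> \<delta>/2" and z: "pushed 0 s - pushed 0 t \<in> Z2" for s t
  proof -
    define k where "k = round (s - t0)"
    have "pushed 0 (s - of_int k) - pushed 0 (t - of_int k) = pushed 0 s - pushed 0 t"
      using pushed_shift[of "s - of_int k" k] pushed_shift[of "t - of_int k" k] by simp
    with z have "pushed 0 (s - of_int k) - pushed 0 (t - of_int k) \<in> Z2" by simp
    then have "(s - of_int k) - (t - of_int k) \<in> \<int>"
      using s by (intro pushed_embedding_centre) (auto simp: k_def algebra_simps)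
    then show ?thesis by simp
  qed
  show ?thesis
  proof (cases "\<bar>s - t0 - of_int (round (s - t0))\<bar> \<le> \<delta>/2")
    case True then show ?thesis using supported z by blast
  next
    case Fs: False
    show ?thesis
    proof (cases "\<bar>t - t0 - of_int (round (t - t0))\<bar> \<le> \<delta>/2")
      case True
      then have "t - s \<in> \<int>" using supported Z2_uminus[OF z] by simp
      then show ?thesis using Ints_minus by fastforce
    next
      case False
      then show ?thesis using pushed_far_eq Fs emb z by (auto simp: embedded_loop_def)
    qed
  qed
qed

lemma pushed_regular: "pushed 1 t \<noteq> 0"
proof -
  define s where "s = t - of_int (round (t - t0))"
  show ?thesis
  proof (cases "\<bar>s - t0\<bar> \<le> \<delta>")
    case True
    have "pushed 1 t = pushed 1 s"
      using quasi_periodic_deriv_of_int[OF pushed_periodic pushed_deriv_0, of s "round (t - t0)"]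
      by (simp add: s_def)
    then show ?thesis using pushed_transverse_near[OF True] by auto
  next
    case False
    moreover have "\<bar>t - t0 - of_int (round (t - t0))\<bar> = \<bar>s - t0\<bar>" by (simp add: s_def algebra_simps)
    ultimately have "pushed 1 t = D 1 t" using pushed_far_eq(2)[of t] delta by simp
    then show ?thesis using emb vector_derivative_\<gamma> by (simp add: embedded_loop_def)
  qed
qed

lemma embedded_loop_pushed: "embedded_loop A (pushed 0)"
  unfolding embedded_loop_def smooth_curve_def
  using pushed_deriv pushed_periodic vector_derivative_pushed pushed_regular pushed_embedding by auto

lemma tangencies_pushed: "tangencies L (pushed 0) = tangencies L \<gamma> - {frac t0}"
proof -
  have "pushed 1 s \<in> L (pushed 0 s) \<longleftrightarrow> D 1 s \<in> L (\<gamma> s) \<and> s \<noteq> frac t0"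
    if s01: "0 \<le> s" "s < 1" for s
  proof -
    define k where "k = round (s - t0)"
    define s' where "s' = s - of_int k"
    have frac_iff: "s = frac t0 \<longleftrightarrow> s' = t0"
    proof
      assume "s = frac t0"
      then obtain n where n: "s - t0 = of_int n"
        using frac_unique_iff[of t0 s] by (metis Ints_cases Ints_minus minus_diff_eq)
      then show "s' = t0" by (simp add: s'_def k_def)
    next
      assume "s' = t0"
      then have "t0 - s = of_int (- k)" by (simp add: s'_def)
      then have "t0 - s \<in> \<int>" by (metis Ints_of_int)
      then show "s = frac t0" using frac_unique_iff[of t0 s] s01 by simp
    qed
    have shift: "s = s' + of_int k" by (simp add: s'_def)
    show ?thesis
    proof (cases "\<bar>s' - t0\<bar> \<le> \<delta>")
      case True
      have "pushed 1 s' \<notin> L (pushed 0 s')"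
        using pushed_transverse_near[OF True] L_ker pushed_near[OF True] cball_subset by auto
      moreover have "\<gamma> s' \<in> cball (\<gamma> t0) \<rho>" using near[OF True] rho by auto
      then have "\<gamma> s' \<in> U" using cball_subset by blast
      then have "D 1 s' \<in> L (\<gamma> s') \<longleftrightarrow> s' = t0"
        using transverse[OF True] L_ker tangent by (cases "s' = t0") auto
      ultimately show ?thesis
        using pushed_tangent_shift[of s' k] \<gamma>_tangent_shift[of s' k] frac_iff shift by auto
    next
      case False
      then have "pushed 0 s = \<gamma> s" "pushed 1 s = D 1 s" "s \<noteq> frac t0"
        using pushed_far_eq[of s] frac_iff delta by (auto simp: s'_def k_def algebra_simps)
      then show ?thesis by simp
    qed
  qed
  then show ?thesis unfolding tangencies_def vector_derivative_pushed vector_derivative_\<gamma> by auto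
qed

end

section \<open>Minimal contact curves\<close>

lemma embedded_loop_derivs:
  assumes "embedded_loop A g"
  obtains D where "D 0 = g" "\<And>n t. (D n has_vector_derivative D (Suc n) t) (at t)"
    "\<And>t. vector_derivative g (at t) = D 1 t"
proof -
  obtain D where D: "D 0 = g" "\<And>n t. (D n has_vector_derivative D (Suc n) t) (at t)"
    using assms unfolding embedded_loop_def smooth_curve_def by blast
  moreover have "vector_derivative g (at t) = D 1 t" for t
    using D(2)[of 0 t] D(1) by (simp add: vector_derivative_at)
  ultimately show ?thesis by (rule that)
qed

lemma embedded_loop_frac_tangency_iff:
  assumes "embedded_loop A g" "A \<in> Z2" "\<And>x k. k \<in> Z2 \<Longrightarrow> L (x + k) = L x"
  shows "frac t \<in> tangencies L g \<longleftrightarrow> vector_derivative g (at t) \<in> L (g t)"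
proof -
  obtain D where D: "D 0 = g" "\<And>n t. (D n has_vector_derivative D (Suc n) t) (at t)"
    "\<And>t. vector_derivative g (at t) = D 1 t"
    using embedded_loop_derivs[OF assms(1)] by blast
  have "\<And>t. g (t + 1) = g t + A" using assms(1) by (simp add: embedded_loop_def)
  moreover have "\<And>t. (g has_vector_derivative D 1 t) (at t)" using D(2)[of 0] D(1) by simp
  ultimately have "D 1 (t + of_int (- \<lfloor>t\<rfloor>)) \<in> L (g (t + of_int (- \<lfloor>t\<rfloor>))) \<longleftrightarrow> D 1 t \<in> L (g t)"
    by (rule quasi_periodic_tangent_of_int) (use assms(2,3) in auto)
  then show ?thesis using frac_lt_1[of t] by (simp add: tangencies_def D(3) frac_def)
qed

lemma isolated_tangency:
  assumes emb: "embedded_loop A g" and A: "A \<in> Z2" and L: "\<And>x k. k \<in> Z2 \<Longrightarrow> L (x + k) = L x"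
    and fin: "finite (tangencies L g)"
  obtains d where "0 < d" "\<And>s. \<bar>s - t0\<bar> < d \<Longrightarrow> s \<noteq> t0 \<Longrightarrow> vector_derivative g (at s) \<notin> L (g s)"
proof -
  define S where "S = {s \<in> {t0 - 1/4 .. t0 + 1/4}. vector_derivative g (at s) \<in> L (g s)}"
  have "frac ` S \<subseteq> tangencies L g"
    unfolding S_def using embedded_loop_frac_tangency_iff[OF emb A L] by blast
  then have "finite (frac ` S)" using fin finite_subset by blast
  moreover have "inj_on frac S"
  proof
    fix a b assume ab: "a \<in> S" "b \<in> S" "frac a = frac b"
    then have n: "a - b = of_int (\<lfloor>a\<rfloor> - \<lfloor>b\<rfloor>)" by (simp add: frac_def algebra_simps)
    have "\<bar>a - b\<bar> \<le> 1/2" using ab unfolding S_def abs_le_iff by auto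
    then have "of_int \<bar>\<lfloor>a\<rfloor> - \<lfloor>b\<rfloor>\<bar> < (1::real)" using n by simp
    then have "\<lfloor>a\<rfloor> - \<lfloor>b\<rfloor> = 0" by (simp only: of_int_less_1_iff)
    then show "a = b" using n by simp
  qed
  ultimately have "finite S" using finite_imageD by blast
  then obtain d0 where d0: "d0 > 0" "\<And>x. x \<in> S \<Longrightarrow> x \<noteq> t0 \<Longrightarrow> d0 \<le> dist t0 x"
    using finite_set_avoid[of S t0] by blast
  show ?thesis
  proof (rule that[of "min d0 (1/4)"])
    fix s assume s: "\<bar>s - t0\<bar> < min d0 (1/4)" "s \<noteq> t0"
    show "vector_derivative g (at s) \<notin> L (g s)"
    proof
      assume "vector_derivative g (at s) \<in> L (g s)"
      moreover have "\<bar>s - t0\<bar> \<le> 1/4" using s(1) by simp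
      ultimately have "s \<in> S" unfolding S_def abs_le_iff by auto
      then have "d0 \<le> dist s t0" using d0(2) s(2) by (simp add: dist_commute)
      then show False using s(1) by (simp add: dist_real_def)
    qed
  qed (use d0 in auto)
qed

lemma embedded_loop_separation:
  assumes emb: "embedded_loop A g" and "0 \<le> a" "0 < r" "r \<le> 1/2"
  obtains m where "0 < m"
    "\<And>s d. \<bar>s - t0\<bar> \<le> a \<Longrightarrow> r \<le> \<bar>d\<bar> \<Longrightarrow> \<bar>d\<bar> \<le> 1/2 \<Longrightarrow> m \<le> infdist (g s - g (s - d)) Z2"
proof -
  define K where "K = {t0 - a .. t0 + a} \<times> ({r .. 1/2} \<union> {-1/2 .. -r})"
  define q where "q z = infdist (g (fst z) - g (fst z - snd z)) Z2" for z :: "real \<times> real"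
  obtain D where D: "D 0 = g" "\<And>n t. (D n has_vector_derivative D (Suc n) t) (at t)"
    using embedded_loop_derivs[OF emb] by blast
  have g: "continuous_on UNIV g"
    using D(2)[of 0] D(1) by (metis continuous_at_imp_continuous_on has_vector_derivative_continuous)
  have "continuous_on K (\<lambda>z. g (fst z))" "continuous_on K (\<lambda>z. g (fst z - snd z))"
    by (rule continuous_on_compose2[OF g], auto intro!: continuous_intros)+
  then have "continuous_on K q"
    unfolding q_def by (intro continuous_on_infdist continuous_on_diff)
  moreover have "compact K" unfolding K_def by (intro compact_Times compact_Un compact_Icc)
  moreover have "(t0, 1/2) \<in> K" using assms by (auto simp: K_def)
  ultimately obtain z0 where z0: "z0 \<in> K" "\<And>z. z \<in> K \<Longrightarrow> q z0 \<le> q z"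
    using continuous_attains_inf[of K q] by blast
  have "0 < q z" if "z \<in> K" for z
  proof -
    obtain s d where z: "z = (s, d)" by (cases z)
    have d: "r \<le> \<bar>d\<bar>" "\<bar>d\<bar> \<le> 1/2" using that assms by (auto simp: K_def z)
    have "g s - g (s - d) \<notin> Z2"
    proof
      assume "g s - g (s - d) \<in> Z2"
      then have "d \<in> \<int>" using emb unfolding embedded_loop_def by fastforce
      then obtain n where n: "d = of_int n" by (auto elim: Ints_cases)
      then have "of_int \<bar>n\<bar> < (1::real)" "0 < \<bar>n\<bar>" using d assms by auto
      then show False by (simp only: of_int_less_1_iff)
    qed
    then show ?thesis
      unfolding q_def z using infdist_pos_not_in_closed[OF closed_Z2] zero_in_Z2 by auto
  qed
  moreover have "(s, d) \<in> K" if "\<bar>s - t0\<bar> \<le> a" "r \<le> \<bar>d\<bar>" "\<bar>d\<bar> \<le> 1/2" for s d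
    using that unfolding K_def by (auto simp: abs_le_iff)
  ultimately show ?thesis using z0 by (intro that[of "q z0"]) (auto simp: q_def)
qed

lemma eventually_mult_less_at_right_0:
  fixes a r :: real
  assumes "0 < r"
  shows "\<forall>\<^sub>F \<epsilon> in at_right 0. \<epsilon> * a < r"
proof -
  have "((\<lambda>\<epsilon>. \<epsilon> * a) \<longlongrightarrow> 0 * a) (at_right 0)" by (intro tendsto_intros)
  from order_tendstoD(2)[OF this, of r] show ?thesis using assms by simp
qed

lemma small_factor_exists:
  fixes a b ra rb rc :: real
  assumes "0 < ra" "0 < rb" "0 < rc"
  obtains \<epsilon> where "0 < \<epsilon>" "\<epsilon> * a < ra" "\<epsilon> * (a * b) < rb" "\<epsilon> * (2 * a) < rc"
proof -
  have "\<forall>\<^sub>F \<epsilon> in at_right 0. 0 < \<epsilon> \<and> \<epsilon> * a < ra \<and> \<epsilon> * (a * b) < rb \<and> \<epsilon> * (2 * a) < rc"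
    using assms by (intro eventually_conj eventually_at_right_less eventually_mult_less_at_right_0)
  moreover have "at_right (0::real) \<noteq> bot" by simp
  ultimately show ?thesis using that eventually_happens' by blast
qed

lemma continuous_on_compact_pos_lower_bound:
  fixes h :: "'a::topological_space \<Rightarrow> real"
  assumes "compact K" "continuous_on K h" "\<And>x. x \<in> K \<Longrightarrow> 0 < h x"
  obtains c where "0 < c" "\<And>x. x \<in> K \<Longrightarrow> c \<le> h x"
proof (cases "K = {}")
  case False
  then obtain x0 where "x0 \<in> K" "\<And>x. x \<in> K \<Longrightarrow> h x0 \<le> h x"
    using continuous_attains_inf[OF assms(1) False assms(2)] by blast
  then show ?thesis using that[of "h x0"] assms(3) by blast
qed (use that[of 1] in auto)

lemma crossing_tangency_oriented_frame:
  fixes L :: "real^2 \<Rightarrow> (real^2) set" and A :: "real^2" and \<gamma> :: "real \<Rightarrow> real^2"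
  assumes L: "\<And>x k. k \<in> Z2 \<Longrightarrow> L (x + k) = L x" and A: "A \<in> Z2"
    and emb: "embedded_loop A \<gamma>" and fin: "finite (tangencies L \<gamma>)"
    and crosses: "leaf_crosses L \<gamma> t0"
  obtains U F G \<rho> \<Lambda> \<Gamma> w \<delta> where "gradient_frame L (\<gamma> t0) U F G \<rho> \<Lambda> \<Gamma> w" "0 < \<delta>" "\<delta> \<le> 1/4"
    "\<And>s. \<bar>s - t0\<bar> \<le> \<delta> \<Longrightarrow> \<gamma> s \<in> cball (\<gamma> t0) (\<rho>/2)"
    "\<And>s. \<bar>s - t0\<bar> \<le> \<delta> \<Longrightarrow> s \<noteq> t0 \<Longrightarrow> 0 < vector_derivative \<gamma> (at s) \<bullet> G (\<gamma> s)"
proof -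
  obtain D where D0: "D 0 = \<gamma>" and D_deriv: "\<And>n t. (D n has_vector_derivative D (Suc n) t) (at t)"
    and vd: "\<And>t. vector_derivative \<gamma> (at t) = D 1 t"
    using embedded_loop_derivs[OF emb] by blast
  have \<gamma>_deriv: "(\<gamma> has_vector_derivative D 1 t) (at t)" for t using D_deriv[of 0 t] D0 by simp
  have cont_\<gamma>: "continuous_on UNIV \<gamma>" and cont_D1: "continuous_on UNIV (D 1)"
    using \<gamma>_deriv D_deriv[of 1]
    by (metis continuous_at_imp_continuous_on has_vector_derivative_continuous)+
  obtain U f where lfi: "local_first_integral L (\<gamma> t0) U f"
    and crossing: "\<And>\<delta>. \<delta> > 0 \<Longrightarrow> \<exists>s1\<in>ball t0 \<delta>. \<exists>s2\<in>ball t0 \<delta>.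
        \<gamma> s1 \<in> U \<and> \<gamma> s2 \<in> U \<and> f (\<gamma> s1) < 0 \<and> 0 < f (\<gamma> s2)"
    using crosses unfolding leaf_crosses_def by blast
  obtain G \<rho> \<Lambda> \<Gamma> w where "gradient_frame L (\<gamma> t0) U f G \<rho> \<Lambda> \<Gamma> w"
    using gradient_frame_exists[OF lfi] by blast
  then interpret frame: gradient_frame L "\<gamma> t0" U f G \<rho> \<Lambda> \<Gamma> w .
  obtain d0 where d0: "0 < d0" "\<And>s. \<bar>s - t0\<bar> < d0 \<Longrightarrow> s \<noteq> t0 \<Longrightarrow> D 1 s \<notin> L (\<gamma> s)"
    using isolated_tangency[OF emb A L fin, of t0] vd by metis
  have "\<forall>e>0. \<exists>d>0. \<forall>s\<in>UNIV. dist s t0 < d \<longrightarrow> dist (\<gamma> s) (\<gamma> t0) < e"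
    using cont_\<gamma> unfolding continuous_on_iff by blast
  from this[rule_format, of "\<rho>/2"] frame.rho(1)
  obtain d1 where d1: "0 < d1" "\<And>s. dist s t0 < d1 \<Longrightarrow> dist (\<gamma> s) (\<gamma> t0) < \<rho>/2"
    by auto
  define \<delta> where "\<delta> = min (min (d0/2) (d1/2)) (1/4)"
  have \<delta>: "0 < \<delta>" "\<delta> \<le> 1/4" using d0 d1 by (auto simp: \<delta>_def)
  have near: "\<gamma> s \<in> cball (\<gamma> t0) (\<rho>/2)" if "\<bar>s - t0\<bar> \<le> \<delta>" for s
    using d1(2)[of s] that d1(1) by (auto simp: \<delta>_def dist_real_def dist_commute)
  have in_U: "\<gamma> s \<in> U" if "\<bar>s - t0\<bar> \<le> \<delta>" for s
    using near[OF that] frame.cball_subset frame.rho(1) by auto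
  have no_tangency: "D 1 s \<notin> L (\<gamma> s)" if "\<bar>s - t0\<bar> \<le> \<delta>" "s \<noteq> t0" for s
    using d0 that by (auto simp: \<delta>_def)
  obtain s1 s2 where s12: "\<bar>s1 - t0\<bar> < \<delta>" "f (\<gamma> s1) < 0" "\<bar>s2 - t0\<bar> < \<delta>" "0 < f (\<gamma> s2)"
    using crossing[OF \<delta>(1)] by (auto simp: dist_real_def abs_minus_commute)
  obtain F' G' w' where frame': "gradient_frame L (\<gamma> t0) U F' G' \<rho> \<Lambda> \<Gamma> w'"
    and transverse: "\<And>s. \<bar>s - t0\<bar> \<le> \<delta> \<Longrightarrow> s \<noteq> t0 \<Longrightarrow> 0 < D 1 s \<bullet> G' (\<gamma> s)"
    using frame.crossing_orientation[OF \<gamma>_deriv cont_D1 refl \<delta>(1) in_U no_tangency s12] by blast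
  have "0 < vector_derivative \<gamma> (at s) \<bullet> G' (\<gamma> s)" if "\<bar>s - t0\<bar> \<le> \<delta>" "s \<noteq> t0" for s
    using transverse[OF that] by (simp add: vd)
  then show ?thesis using that frame' \<delta> near by blast
qed

lemma crossing_tangency_removable:
  fixes L :: "real^2 \<Rightarrow> (real^2) set" and A :: "real^2" and \<gamma> :: "real \<Rightarrow> real^2"
  assumes L: "\<And>x k. k \<in> Z2 \<Longrightarrow> L (x + k) = L x" and A: "A \<in> Z2"
    and emb: "embedded_loop A \<gamma>" and fin: "finite (tangencies L \<gamma>)"
    and tangent: "vector_derivative \<gamma> (at t0) \<in> L (\<gamma> t0)" and crosses: "leaf_crosses L \<gamma> t0"
  obtains g where "embedded_loop A g" "tangencies L g = tangencies L \<gamma> - {frac t0}"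
proof -
  obtain D where D0: "D 0 = \<gamma>" and D_deriv: "\<And>n t. (D n has_vector_derivative D (Suc n) t) (at t)"
    and vd: "\<And>t. vector_derivative \<gamma> (at t) = D 1 t"
    using embedded_loop_derivs[OF emb] by blast
  have cont_\<gamma>: "continuous_on UNIV \<gamma>" and cont_D1: "continuous_on UNIV (D 1)"
    using D_deriv[of 0] D_deriv[of 1] D0
    by (metis continuous_at_imp_continuous_on has_vector_derivative_continuous)+
  obtain U F G \<rho> \<Lambda> \<Gamma> w \<delta> where frame: "gradient_frame L (\<gamma> t0) U F G \<rho> \<Lambda> \<Gamma> w"
    and \<delta>: "0 < \<delta>" "\<delta> \<le> 1/4" and near: "\<And>s. \<bar>s - t0\<bar> \<le> \<delta> \<Longrightarrow> \<gamma> s \<in> cball (\<gamma> t0) (\<rho>/2)"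
    and transverse': "\<And>s. \<bar>s - t0\<bar> \<le> \<delta> \<Longrightarrow> s \<noteq> t0 \<Longrightarrow> 0 < vector_derivative \<gamma> (at s) \<bullet> G (\<gamma> s)"
    using crossing_tangency_oriented_frame[OF L A emb fin crosses] by blast
  have transverse: "0 < D 1 s \<bullet> G (\<gamma> s)" if "\<bar>s - t0\<bar> \<le> \<delta>" "s \<noteq> t0" for s
    using transverse'[OF that] vd by simp
  interpret frame: gradient_frame L "\<gamma> t0" U F G \<rho> \<Lambda> \<Gamma> w by (fact frame)
  obtain M where "\<And>s. s \<in> {t0 - \<delta> .. t0 + \<delta>} \<Longrightarrow> norm (D 1 s) \<le> M"
    using continuous_on_compact_bound[OF compact_Icc continuous_on_subset[OF cont_D1 subset_UNIV]] by blast
  then have M: "norm (D 1 s) \<le> M" if "\<bar>s - t0\<bar> \<le> \<delta>" for s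
    using that by (auto simp: abs_le_iff)
  have J: "\<bar>s - t0\<bar> \<le> \<delta>" "s \<noteq> t0" if "s \<in> {t0 + \<delta>/4 .. t0 + \<delta>/2}" for s
    using that \<delta>(1) by auto
  have "\<gamma> s \<in> U" if "\<bar>s - t0\<bar> \<le> \<delta>" for s
    using near[OF that] frame.cball_subset frame.rho(1) by auto
  then have "continuous_on {t0 + \<delta>/4 .. t0 + \<delta>/2} (\<lambda>s. D 1 s \<bullet> G (\<gamma> s))"
    using J(1) by (intro continuous_on_inner continuous_on_subset[OF cont_D1]
        continuous_on_compose2[OF frame.G_cont] continuous_on_subset[OF cont_\<gamma>]) auto
  then obtain c where "0 < c" "\<And>s. s \<in> {t0 + \<delta>/4 .. t0 + \<delta>/2} \<Longrightarrow> c \<le> D 1 s \<bullet> G (\<gamma> s)"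
    using continuous_on_compact_pos_lower_bound[OF compact_Icc] transverse J by blast
  then have c: "0 < c" "\<And>s. t0 + \<delta>/4 \<le> s \<Longrightarrow> s \<le> t0 + \<delta>/2 \<Longrightarrow> c \<le> D 1 s \<bullet> G (\<gamma> s)"
    by auto
  obtain Db B where Db: "\<And>n t. (Db n has_real_derivative Db (Suc n) t) (at t)"
    "\<And>n x. \<delta>/2 < \<bar>x\<bar> \<Longrightarrow> Db n x = 0" "\<And>x. 0 \<le> Db 0 x"
    "\<And>x. \<delta>/2 \<le> \<bar>x\<bar> \<Longrightarrow> Db 0 x = 0 \<and> Db 1 x = 0"
    "\<And>x. -(\<delta>/2) < x \<Longrightarrow> x \<le> \<delta>/2/2 \<Longrightarrow> 0 < Db 0 x \<and> (2 * \<Lambda> * M / norm w + 1) * Db 0 x \<le> Db 1 x"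
    "\<And>x. \<bar>Db 0 x\<bar> \<le> B \<and> \<bar>Db 1 x\<bar> \<le> B"
    using smooth_bump_exists[of "\<delta>/2" "2 * \<Lambda> * M / norm w + 1"] \<delta>(1) by (metis half_gt_zero)
  obtain m where m: "0 < m" "\<And>s d. \<bar>s - t0\<bar> \<le> \<delta>/2 \<Longrightarrow> \<delta>/2 \<le> \<bar>d\<bar> \<Longrightarrow> \<bar>d\<bar> \<le> 1/2 \<Longrightarrow>
      m \<le> infdist (\<gamma> s - \<gamma> (s - d)) Z2"
    using embedded_loop_separation[OF emb, of "\<delta>/2" "\<delta>/2" t0] \<delta> by auto
  obtain \<epsilon> where "0 < \<epsilon>" "\<epsilon> * (B * norm w) < \<rho>/2" "\<epsilon> * (B * norm w * (\<Lambda> * M + \<Gamma>)) < c"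
    "\<epsilon> * (2 * (B * norm w)) < m"
    by (rule small_factor_exists[where a = "B * norm w" and b = "\<Lambda> * M + \<Gamma>" and ra = "\<rho>/2"
        and rb = c and rc = m])
      (use frame.rho(1) c(1) m(1) in auto)
  then have \<epsilon>: "0 < \<epsilon>" "\<epsilon> * B * norm w \<le> \<rho>/2" "\<epsilon> * B * norm w * (\<Lambda> * M + \<Gamma>) < c"
    "2 * (\<epsilon> * B * norm w) < m"
    by (simp_all add: mult_ac)
  interpret tangency_removal L \<gamma> t0 U F G \<rho> \<Lambda> \<Gamma> w A D \<delta> M Db B c m \<epsilon>
  proof (intro tangency_removal.intro tangency_removal_axioms.intro)
    show "D 1 t0 \<in> L (\<gamma> t0)" using tangent vd by simp
    show "0 < Db 0 x \<and> (2 * \<Lambda> * M / norm w + 1) * Db 0 x \<le> Db 1 x" if "-(\<delta>/2) < x" "x \<le> \<delta>/4" for x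
      using Db(5)[of x] that by simp
  qed (fact frame emb A L D0 D_deriv \<delta> near transverse M Db c m \<epsilon>)+
  show ?thesis using that embedded_loop_pushed tangencies_pushed .
qed

theorem mainTheorem10:
  fixes L :: "real^2 \<Rightarrow> (real^2) set" and A :: "real^2" and \<gamma> :: "real \<Rightarrow> real^2"
  assumes "foliation_T2 L"
    and "A \<in> Z2"
    and "\<not> closed_leaf_class L A"
    and "minimal_contact_curve L A \<gamma>"
  shows "\<forall>t0. vector_derivative \<gamma> (at t0) \<in> L (\<gamma> t0) \<longrightarrow> \<not> leaf_crosses L \<gamma> t0"
proof (intro allI impI notI)
  fix t0
  assume tangent: "vector_derivative \<gamma> (at t0) \<in> L (\<gamma> t0)" and crosses: "leaf_crosses L \<gamma> t0"
  have L: "\<And>x k. k \<in> Z2 \<Longrightarrow> L (x + k) = L x" using assms(1) unfolding foliation_T2_def by blast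
  have emb: "embedded_loop A \<gamma>" and fin: "finite (tangencies L \<gamma>)"
    and minimal: "\<And>g. embedded_loop A g \<Longrightarrow> finite (tangencies L g) \<Longrightarrow>
      card (tangencies L \<gamma>) \<le> card (tangencies L g)"
    using assms(4) unfolding minimal_contact_curve_def by auto
  obtain g where g: "embedded_loop A g" "tangencies L g = tangencies L \<gamma> - {frac t0}"
    using crossing_tangency_removable[OF L assms(2) emb fin tangent crosses] by blast
  have "frac t0 \<in> tangencies L \<gamma>"
    using embedded_loop_frac_tangency_iff[OF emb assms(2) L] tangent by blast
  then have "card (tangencies L g) < card (tangencies L \<gamma>)"
    using g(2) card_Diff1_less[OF fin] by simp
  moreover have "card (tangencies L \<gamma>) \<le> card (tangencies L g)"
    using minimal[OF g(1)] g(2) fin by simp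
  ultimately show False by simp
qed

end
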